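(* Under the standing setup (C1)–(C4), $$\frac1n\sum_{k=0}^n\prod_{j=1}^\ell X_j(q_j(k))\longrightarrow\prod_{j=1}^\ell a_j\quad\text{as }n\to\infty,$$ both in $L^2$ and with probability one.
   Context: Standing setup. $(\Omega,\mathcal F,P)$ is a probability space, $\ell\ge1$, $X_1,\dots,X_\ell$ are real stationary processes $X_j(n)$, $n\ge0$, with $|X_j(n)|\le D$ a.s. $\{\mathcal F_{kl}\}$ is a family of sub-$\sigma$-algebras, $\mathcal F_{kl}\subset\mathcal F_{k'l'}$ for $k'\le k$, $l'\ge l$. $\alpha(n)=\sup_{k\ge0}\sup_{A\in\mathcal F_{-\infty,k},B\in\mathcal F_{k+n,\infty}}|P(A\cap B)-P(A)P(B)|$, $\beta_j(n)=\sup_{m\ge0}E|X_j(m)-E(X_j(m)\mid\mathcal F_{m-n,m+n})|$. (C1): $\alpha(n)+\max_j\beta_j(n)\le\kappa^{-1}e^{-\kappa n}$ for some $\kappa>0$ and all $n$. (C2): $q_1(n)=rn+p$ with integers $r>0,p\ge0$. There exist $\gamma\in(0,1)$, $n_0>1$ such that for $n\ge n_0$: (C3) $q_j(n+1)\ge q_j(n)+n^\gamma$ for $j=2,\dots,\ell$; (C4) $q_{j+1}([n^{1-\gamma}])\ge q_j(n)n^\gamma$ for $j=1,\dots,\ell-1$. All $q_j$ take nonnegative integer values on nonnegative integers. $a_j=EX_j(0)$. *)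

theory Defs
  imports "HOL-Probability.Probability" "HOL-Library.Extended"
begin

definition alpha_mix :: "'a measure \<Rightarrow> (int extended \<Rightarrow> int extended \<Rightarrow> 'a measure) \<Rightarrow> nat \<Rightarrow> real" where
  "alpha_mix M F n = Sup {\<bar>measure M (A \<inter> B) - measure M A * measure M B\<bar> | k A B.
      k \<ge> (0::int) \<and> A \<in> sets (F Minf (Fin k)) \<and> B \<in> sets (F (Fin (k + int n)) Pinf)}"

definition beta_approx :: "'a measure \<Rightarrow> (int extended \<Rightarrow> int extended \<Rightarrow> 'a measure) \<Rightarrow> (nat \<Rightarrow> 'a \<Rightarrow> real) \<Rightarrow> nat \<Rightarrow> real" where
  "beta_approx M F Y n = (SUP m\<in>(UNIV::nat set).
      integral\<^sup>L M (\<lambda>\<omega>. \<bar>Y m \<omega> - real_cond_exp M (F (Fin (int m - int n)) (Fin (int m + int n))) (Y m) \<omega>\<bar>))"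

definition stationary_proc :: "'a measure \<Rightarrow> (nat \<Rightarrow> 'a \<Rightarrow> real) \<Rightarrow> bool" where
  "stationary_proc M Y \<longleftrightarrow> (\<forall>m.
      distr M (Pi\<^sub>M UNIV (\<lambda>_. borel)) (\<lambda>\<omega> n. Y (n + m) \<omega>)
    = distr M (Pi\<^sub>M UNIV (\<lambda>_. borel)) (\<lambda>\<omega> n. Y n \<omega>))"

end

theory Submission
  imports Defs
begin

(*
  Put Y(k) = \<Prod>\<^sub>j X\<^sub>j(q\<^sub>j(k)), a = \<Prod>\<^sub>j E X\<^sub>j(0) and S(n) = (1/n) \<Sum>\<^sub>k\<^sub>\<le>\<^sub>n Y(k).
  The proof is a second moment argument.

  (1) Mixing.  Ibragimov's covariance inequality |Cov(U,V)| \<le> 4 \<alpha> \<parallel>U\<parallel>\<^sub>\<infinity> \<parallel>V\<parallel>\<^sub>\<infinity> for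
      U, V measurable w.r.t. \<alpha>-mixing \<sigma>-algebras is iterated to decorrelate a
      product of bounded factors localised at g-separated times.  Replacing
      each X\<^sub>j(t) by its conditional expectation onto F(t-s, t+s) (error \<beta>(s))
      shows that E \<Prod> X\<^sub>j(t\<^sub>j) is exponentially close to \<Prod> E X\<^sub>j(0) when the
      times t\<^sub>j are g-separated.
  (2) Combinatorics of the times q\<^sub>j(k).  By (C2)-(C4) the values q\<^sub>j(k) are
      g-separated once k^\<gamma> > g, and for fixed n only O(n g^P) pairs (k,m) \<le> n
      fail to have all of q\<^sub>i(k), q\<^sub>j(m) pairwise g-separated.
  (3) Hence E(S(n) - a)^2 \<le> C g^P / n + C' e^(-\<kappa> g/3); choosing n = i^(P+2)
      and g = i gives a summable sequence, so S(i^(P+2)) \<rightarrow> a in L^2 and a.s.,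
      and the bounded increments of S between i^(P+2) and (i+1)^(P+2) give the
      convergence along the full sequence.
*)

section \<open>Covariance inequalities under strong mixing\<close>

lemma (in prob_space) sigma_finite_subalgebra_of_subalgebra:
  assumes "subalgebra M G"
  shows "sigma_finite_subalgebra M G"
  by (intro finite_measure_subalgebra_is_sigma_finite)
     (simp add: assms finite_measure_subalgebra_def finite_measure_subalgebra_axioms_def
        finite_measure_axioms)

lemma (in prob_space) abs_integral_le_const:
  fixes f :: "'a \<Rightarrow> real"
  assumes "f \<in> borel_measurable M" "AE x in M. \<bar>f x\<bar> \<le> B"
  shows "\<bar>\<integral>x. f x \<partial>M\<bar> \<le> B"
proof -
  have i: "integrable M f" by (rule integrable_const_bound) (use assms in auto)
  have "\<bar>\<integral>x. f x \<partial>M\<bar> \<le> (\<integral>x. \<bar>f x\<bar> \<partial>M)" by (rule integral_abs_bound)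
  also have "\<dots> \<le> (\<integral>x. B \<partial>M)" by (rule integral_mono_AE) (use i assms(2) in auto)
  finally show ?thesis by (simp add: prob_space)
qed

lemma (in prob_space) cond_exp_abs_bound:
  assumes G: "subalgebra M G" and f[measurable]: "f \<in> borel_measurable M"
    and b: "AE x in M. \<bar>f x\<bar> \<le> B"
  shows "AE x in M. \<bar>real_cond_exp M G f x\<bar> \<le> B"
proof -
  interpret sG: sigma_finite_subalgebra M G using sigma_finite_subalgebra_of_subalgebra[OF G] .
  have i: "integrable M f" by (rule integrable_const_bound) (use b in auto)
  have "AE x in M. real_cond_exp M G f x \<le> B" by (rule sG.real_cond_exp_le_c[OF i]) (use b in auto)
  moreover have "AE x in M. real_cond_exp M G f x \<ge> -B"
    by (rule sG.real_cond_exp_ge_c[OF i]) (use b in auto)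
  ultimately show ?thesis by eventually_elim auto
qed

lemma abs_prod_le_power:
  fixes a :: "'b \<Rightarrow> real"
  assumes "\<And>i. i \<in> I \<Longrightarrow> \<bar>a i\<bar> \<le> B"
  shows "\<bar>\<Prod>i\<in>I. a i\<bar> \<le> B ^ card I"
proof -
  have "(\<Prod>i\<in>I. \<bar>a i\<bar>) \<le> (\<Prod>i\<in>I. B)" by (rule prod_mono) (use assms in auto)
  then show ?thesis by (simp add: abs_prod)
qed

lemma AE_abs_prod_le:
  fixes Z :: "'b \<Rightarrow> 'a \<Rightarrow> real"
  assumes "finite I" "\<And>x. x \<in> I \<Longrightarrow> AE \<omega> in M. \<bar>Z x \<omega>\<bar> \<le> B"
  shows "AE \<omega> in M. \<bar>\<Prod>x\<in>I. Z x \<omega>\<bar> \<le> B ^ card I"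
proof -
  have "AE \<omega> in M. \<forall>x\<in>I. \<bar>Z x \<omega>\<bar> \<le> B" using assms by (subst AE_finite_all) auto
  then show ?thesis by eventually_elim (rule abs_prod_le_power, auto)
qed

lemma (in prob_space) mixing_cov_sgn:
  assumes G: "subalgebra M G" and H: "subalgebra M H"
   and mix: "\<And>A B. A \<in> sets G \<Longrightarrow> B \<in> sets H \<Longrightarrow> \<bar>prob (A\<inter>B) - prob A * prob B\<bar> \<le> c"
   and f[measurable]: "f \<in> borel_measurable G" and g[measurable]: "g \<in> borel_measurable H"
  shows "\<bar>(\<integral>x. sgn (f x) * sgn (g x) \<partial>M) - (\<integral>x. sgn (f x) \<partial>M) * (\<integral>x. sgn (g x) \<partial>M)\<bar> \<le> 4*c"
proof -
  define A1 where "A1 = {x\<in>space M. f x > 0}"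
  define A2 where "A2 = {x\<in>space M. f x < 0}"
  define B1 where "B1 = {x\<in>space M. g x > 0}"
  define B2 where "B2 = {x\<in>space M. g x < 0}"
  have spG: "space G = space M" and spH: "space H = space M" using G H by (auto simp: subalgebra_def)
  have sG: "sets G \<subseteq> sets M" and sH: "sets H \<subseteq> sets M" using G H by (auto simp: subalgebra_def)
  have "{x\<in>space G. f x > 0} \<in> sets G" "{x\<in>space G. f x < 0} \<in> sets G" by measurable
  then have A: "A1 \<in> sets G" "A2 \<in> sets G" unfolding A1_def A2_def spG .
  have "{x\<in>space H. g x > 0} \<in> sets H" "{x\<in>space H. g x < 0} \<in> sets H" by measurable
  then have B: "B1 \<in> sets H" "B2 \<in> sets H" unfolding B1_def B2_def spH .
  have AM[measurable]: "A1 \<in> sets M" "A2 \<in> sets M" using A sG by auto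
  have BM[measurable]: "B1 \<in> sets M" "B2 \<in> sets M" using B sH by auto
  have ef: "\<And>x. x \<in> space M \<Longrightarrow> sgn (f x) = indicator A1 x - indicator A2 x"
    by (auto simp: A1_def A2_def sgn_if indicator_def)
  have eg: "\<And>x. x \<in> space M \<Longrightarrow> sgn (g x) = indicator B1 x - indicator B2 x"
    by (auto simp: B1_def B2_def sgn_if indicator_def)
  have efg: "\<And>x. x \<in> space M \<Longrightarrow> sgn (f x) * sgn (g x) = 
     indicator (A1\<inter>B1) x - indicator (A1\<inter>B2) x - indicator (A2\<inter>B1) x + indicator (A2\<inter>B2) x"
    by (auto simp: A1_def A2_def B1_def B2_def sgn_if indicator_def)
  have ii[simp]: "\<And>A. A\<in>sets M \<Longrightarrow> integrable M (indicat_real A)"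
    by (rule integrable_real_indicator) (auto simp: less_top[symmetric])
  have i1: "(\<integral>x. sgn (f x) \<partial>M) = prob A1 - prob A2"
    by (subst Bochner_Integration.integral_cong[OF refl ef], simp, subst Bochner_Integration.integral_diff) auto
  have i2: "(\<integral>x. sgn (g x) \<partial>M) = prob B1 - prob B2"
    by (subst Bochner_Integration.integral_cong[OF refl eg], simp, subst Bochner_Integration.integral_diff) auto
  have i3: "(\<integral>x. sgn (f x) * sgn (g x) \<partial>M) = prob (A1\<inter>B1) - prob (A1\<inter>B2) - prob (A2\<inter>B1) + prob (A2\<inter>B2)"
    by (subst Bochner_Integration.integral_cong[OF refl efg], simp, (subst Bochner_Integration.integral_diff Bochner_Integration.integral_add; (auto)?)+)
  have m: "\<bar>prob (A1\<inter>B1) - prob A1 * prob B1\<bar> \<le> c" "\<bar>prob (A1\<inter>B2) - prob A1 * prob B2\<bar> \<le> c"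
     "\<bar>prob (A2\<inter>B1) - prob A2 * prob B1\<bar> \<le> c" "\<bar>prob (A2\<inter>B2) - prob A2 * prob B2\<bar> \<le> c"
    using mix A B by auto
  show ?thesis unfolding i1 i2 i3 using m by (simp add: algebra_simps abs_le_iff)
qed


lemma (in prob_space) cov_le_cond_exp_dev:
  assumes G: "subalgebra M G" and U[measurable]: "U \<in> borel_measurable G"
    and V[measurable]: "V \<in> borel_measurable M"
    and bU: "AE x in M. \<bar>U x\<bar> \<le> Cu" and bV: "AE x in M. \<bar>V x\<bar> \<le> Cv"
  shows "\<bar>(\<integral>x. U x * V x \<partial>M) - (\<integral>x. U x \<partial>M) * (\<integral>x. V x \<partial>M)\<bar> \<le>
    Cu * (\<integral>x. \<bar>real_cond_exp M G V x - (\<integral>y. V y \<partial>M)\<bar> \<partial>M)"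
proof -
  interpret sG: sigma_finite_subalgebra M G using sigma_finite_subalgebra_of_subalgebra[OF G] .
  have UM[measurable]: "U \<in> borel_measurable M" by (rule measurable_from_subalg[OF G U])
  have iU: "integrable M U" by (rule integrable_const_bound[OF _ UM]) (use bU in simp)
  have iV: "integrable M V" by (rule integrable_const_bound[OF _ V]) (use bV in simp)
  have iUV: "integrable M (\<lambda>x. U x * V x)"
    by (rule integrable_const_bound[where B="Cu*Cv"])
       (use bU bV in \<open>eventually_elim, auto simp: abs_mult intro: mult_mono\<close>)
  define EV where "EV = (\<integral>y. V y \<partial>M)"
  define W where "W = real_cond_exp M G V"
  have iW: "integrable M W" unfolding W_def using sG.real_cond_exp_int(1)[OF iV] .
  have iUW: "integrable M (\<lambda>x. U x * W x)"
    unfolding W_def by (rule sG.real_cond_exp_intg(1)[OF iUV U V])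
  have "(\<integral>x. U x * V x \<partial>M) = (\<integral>x. U x * W x \<partial>M)"
    unfolding W_def by (rule sG.real_cond_exp_intg(2)[OF iUV U V, symmetric])
  then have cov: "(\<integral>x. U x * V x \<partial>M) - (\<integral>x. U x \<partial>M) * EV = (\<integral>x. U x * (W x - EV) \<partial>M)"
    using iUW iU by (simp add: right_diff_distrib)
  have iUWE: "integrable M (\<lambda>x. U x * (W x - EV))" using iUW iU by (simp add: right_diff_distrib)
  have "\<bar>\<integral>x. U x * (W x - EV) \<partial>M\<bar> \<le> (\<integral>x. \<bar>U x * (W x - EV)\<bar> \<partial>M)" by (rule integral_abs_bound)
  also have "\<dots> \<le> (\<integral>x. Cu * \<bar>W x - EV\<bar> \<partial>M)"
  proof (rule integral_mono_AE)
    show "integrable M (\<lambda>x. \<bar>U x * (W x - EV)\<bar>)" using iUWE by (simp add: integrable_abs)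
    show "integrable M (\<lambda>x. Cu * \<bar>W x - EV\<bar>)" using iW by (simp add: integrable_abs)
    show "AE x in M. \<bar>U x * (W x - EV)\<bar> \<le> Cu * \<bar>W x - EV\<bar>"
      using bU by eventually_elim (auto simp: abs_mult intro: mult_right_mono)
  qed
  finally show ?thesis using cov by (simp add: EV_def W_def)
qed

lemma (in prob_space) integral_abs_cond_exp_dev:
  assumes G: "subalgebra M G" and V[measurable]: "V \<in> borel_measurable M"
    and bV: "AE x in M. \<bar>V x\<bar> \<le> Cv"
  defines "\<xi> \<equiv> \<lambda>x. sgn (real_cond_exp M G V x - (\<integral>y. V y \<partial>M))"
  shows "(\<integral>x. \<bar>real_cond_exp M G V x - (\<integral>y. V y \<partial>M)\<bar> \<partial>M) =
    (\<integral>x. \<xi> x * V x \<partial>M) - (\<integral>x. \<xi> x \<partial>M) * (\<integral>x. V x \<partial>M)"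
proof -
  interpret sG: sigma_finite_subalgebra M G using sigma_finite_subalgebra_of_subalgebra[OF G] .
  have "AE x in M. 0 \<le> Cv" using bV by eventually_elim auto
  then have Cv0: "0 \<le> Cv" by simp
  define EV where "EV = (\<integral>y. V y \<partial>M)"
  define W where "W = real_cond_exp M G V"
  have \<xi>G[measurable]: "\<xi> \<in> borel_measurable G" unfolding \<xi>_def by measurable
  have i\<xi>V: "integrable M (\<lambda>x. \<xi> x * V x)"
    by (rule integrable_const_bound[where B="Cv"])
       (use bV Cv0 in \<open>auto elim!: eventually_mono simp: \<xi>_def abs_mult sgn_if\<close>)
  have i\<xi>W: "integrable M (\<lambda>x. \<xi> x * W x)"
    unfolding W_def by (rule sG.real_cond_exp_intg(1)[OF i\<xi>V \<xi>G V])
  have i\<xi>: "integrable M \<xi>" by (rule integrable_const_bound[where B="1"]) (auto simp: \<xi>_def sgn_if)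
  have "(\<integral>x. \<bar>W x - EV\<bar> \<partial>M) = (\<integral>x. \<xi> x * W x - \<xi> x * EV \<partial>M)"
    by (rule Bochner_Integration.integral_cong)
       (auto simp: \<xi>_def W_def EV_def abs_sgn right_diff_distrib[symmetric])
  also have "\<dots> = (\<integral>x. \<xi> x * W x \<partial>M) - (\<integral>x. \<xi> x \<partial>M) * EV" using i\<xi>W i\<xi> by simp
  also have "(\<integral>x. \<xi> x * W x \<partial>M) = (\<integral>x. \<xi> x * V x \<partial>M)"
    unfolding W_def by (rule sG.real_cond_exp_intg(2)[OF i\<xi>V \<xi>G V])
  finally show ?thesis unfolding EV_def W_def .
qed

lemma (in prob_space) cov_le_cov_sign:
  assumes G: "subalgebra M G" and U: "U \<in> borel_measurable G" and V: "V \<in> borel_measurable M"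
    and bU: "AE x in M. \<bar>U x\<bar> \<le> Cu" and bV: "AE x in M. \<bar>V x\<bar> \<le> Cv"
  shows "\<bar>(\<integral>x. U x * V x \<partial>M) - (\<integral>x. U x \<partial>M) * (\<integral>x. V x \<partial>M)\<bar> \<le>
    Cu * ((\<integral>x. sgn (real_cond_exp M G V x - (\<integral>y. V y \<partial>M)) * V x \<partial>M) -
          (\<integral>x. sgn (real_cond_exp M G V x - (\<integral>y. V y \<partial>M)) \<partial>M) * (\<integral>x. V x \<partial>M))"
  using cov_le_cond_exp_dev[OF G U V bU bV] integral_abs_cond_exp_dev[OF G V bV] by simp

text \<open>Ibragimov's covariance inequality: applying \<open>cov_le_cov_sign\<close> twice reduces the
  covariance of bounded \<open>U\<close>, \<open>V\<close> to that of two sign functions.\<close>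
lemma (in prob_space) mixing_cov_bound:
  assumes G: "subalgebra M G" and H: "subalgebra M H"
   and mix: "\<And>A B. A \<in> sets G \<Longrightarrow> B \<in> sets H \<Longrightarrow> \<bar>prob (A\<inter>B) - prob A * prob B\<bar> \<le> c"
   and U[measurable]: "U \<in> borel_measurable G" and V[measurable]: "V \<in> borel_measurable H"
   and bU: "AE x in M. \<bar>U x\<bar> \<le> Cu" and bV: "AE x in M. \<bar>V x\<bar> \<le> Cv"
  shows "\<bar>(\<integral>x. U x * V x \<partial>M) - (\<integral>x. U x \<partial>M) * (\<integral>x. V x \<partial>M)\<bar> \<le> 4 * c * Cu * Cv"
proof -
  have "AE x in M. 0 \<le> Cu" using bU by eventually_elim auto
  then have Cu0: "0 \<le> Cu" by simp
  have "AE x in M. 0 \<le> Cv" using bV by eventually_elim auto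
  then have Cv0: "0 \<le> Cv" by simp
  have VM[measurable]: "V \<in> borel_measurable M" by (rule measurable_from_subalg[OF H V])
  define h1 where "h1 = (\<lambda>x. real_cond_exp M G V x - (\<integral>y. V y \<partial>M))"
  define \<xi> where "\<xi> = (\<lambda>x. sgn (h1 x))"
  have h1G[measurable]: "h1 \<in> borel_measurable G" unfolding h1_def by measurable
  have \<xi>G[measurable]: "\<xi> \<in> borel_measurable G" unfolding \<xi>_def by measurable
  have \<xi>M[measurable]: "\<xi> \<in> borel_measurable M" by (rule measurable_from_subalg[OF G \<xi>G])
  define h2 where "h2 = (\<lambda>x. real_cond_exp M H \<xi> x - (\<integral>y. \<xi> y \<partial>M))"
  have h2H[measurable]: "h2 \<in> borel_measurable H" unfolding h2_def by measurable
  have s1: "\<bar>(\<integral>x. U x * V x \<partial>M) - (\<integral>x. U x \<partial>M) * (\<integral>x. V x \<partial>M)\<bar> \<le>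
      Cu * ((\<integral>x. \<xi> x * V x \<partial>M) - (\<integral>x. \<xi> x \<partial>M) * (\<integral>x. V x \<partial>M))"
    using cov_le_cov_sign[OF G U VM bU bV] unfolding \<xi>_def h1_def .
  have b\<xi>: "AE x in M. \<bar>\<xi> x\<bar> \<le> 1" by (auto simp: \<xi>_def sgn_if)
  have s2: "\<bar>(\<integral>x. V x * \<xi> x \<partial>M) - (\<integral>x. V x \<partial>M) * (\<integral>x. \<xi> x \<partial>M)\<bar> \<le>
      Cv * ((\<integral>x. sgn (h2 x) * \<xi> x \<partial>M) - (\<integral>x. sgn (h2 x) \<partial>M) * (\<integral>x. \<xi> x \<partial>M))"
    using cov_le_cov_sign[OF H V \<xi>M bV b\<xi>] unfolding h2_def .
  have s3: "\<bar>(\<integral>x. sgn (h1 x) * sgn (h2 x) \<partial>M) - (\<integral>x. sgn (h1 x) \<partial>M) * (\<integral>x. sgn (h2 x) \<partial>M)\<bar> \<le> 4*c"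
    by (rule mixing_cov_sgn[OF G H mix h1G h2H])
  have e: "(\<integral>x. V x * \<xi> x \<partial>M) = (\<integral>x. \<xi> x * V x \<partial>M)" "(\<integral>x. sgn (h2 x) * \<xi> x \<partial>M) = (\<integral>x. sgn (h1 x) * sgn (h2 x) \<partial>M)"
    by (simp_all add: mult.commute \<xi>_def)
  have "(\<integral>x. \<xi> x * V x \<partial>M) - (\<integral>x. \<xi> x \<partial>M) * (\<integral>x. V x \<partial>M) \<le> Cv * (4*c)"
  proof -
    have "(\<integral>x. \<xi> x * V x \<partial>M) - (\<integral>x. \<xi> x \<partial>M) * (\<integral>x. V x \<partial>M)
        \<le> Cv * ((\<integral>x. sgn (h1 x) * sgn (h2 x) \<partial>M) - (\<integral>x. sgn (h1 x) \<partial>M) * (\<integral>x. sgn (h2 x) \<partial>M))"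
      using s2 unfolding e by (simp add: \<xi>_def mult.commute)
    also have "\<dots> \<le> Cv * (4*c)" using s3 Cv0 by (intro mult_left_mono) auto
    finally show ?thesis .
  qed
  then have "Cu * ((\<integral>x. \<xi> x * V x \<partial>M) - (\<integral>x. \<xi> x \<partial>M) * (\<integral>x. V x \<partial>M)) \<le> Cu * (Cv * (4*c))"
    using Cu0 by (intro mult_left_mono) auto
  with s1 show ?thesis by (simp add: algebra_simps)
qed


lemma (in prob_space) alpha_mix_bound:
  assumes sub: "\<And>k l. subalgebra M (F k l)" and k: "0 \<le> k"
    and A: "A \<in> sets (F Minf (Fin k))" and B: "B \<in> sets (F (Fin (k + int n)) Pinf)"
  shows "\<bar>prob (A \<inter> B) - prob A * prob B\<bar> \<le> alpha_mix M F n"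
  unfolding alpha_mix_def
proof (rule cSup_upper)
  show "\<bar>prob (A \<inter> B) - prob A * prob B\<bar> \<in> {\<bar>measure M (A \<inter> B) - measure M A * measure M B\<bar> | k A B.
      k \<ge> (0::int) \<and> A \<in> sets (F Minf (Fin k)) \<and> B \<in> sets (F (Fin (k + int n)) Pinf)}"
    using k A B by blast
  show "bdd_above {\<bar>measure M (A \<inter> B) - measure M A * measure M B\<bar> | k A B.
      k \<ge> (0::int) \<and> A \<in> sets (F Minf (Fin k)) \<and> B \<in> sets (F (Fin (k + int n)) Pinf)}"
  proof (rule bdd_aboveI[where M=1], clarify)
    fix k A B
    have a: "0 \<le> prob (A\<inter>B)" "prob (A\<inter>B) \<le> 1" "0 \<le> prob A" "prob A \<le> 1" "0 \<le> prob B" "prob B \<le> 1"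
      by auto
    have b: "prob A * prob B \<le> 1" "0 \<le> prob A * prob B"
      using a by (auto intro: mult_le_one)
    from a b show "\<bar>prob (A \<inter> B) - prob A * prob B\<bar> \<le> 1" unfolding abs_le_iff by linarith
  qed
qed

lemma (in prob_space) alpha_mix_nonneg:
  assumes sub: "\<And>k l. subalgebra M (F k l)"
  shows "0 \<le> alpha_mix M F n"
proof -
  have "{} \<in> sets (F Minf (Fin 0))" "{} \<in> sets (F (Fin (0 + int n)) Pinf)" by auto
  from alpha_mix_bound[OF sub _ this] show ?thesis by simp
qed

lemma earliest_separated:
  fixes \<tau> :: "'b \<Rightarrow> nat"
  assumes fin: "finite I" and ne: "I \<noteq> {}"
    and sep: "\<And>x y. x \<in> I \<Longrightarrow> y \<in> I \<Longrightarrow> x \<noteq> y \<Longrightarrow> \<tau> x + g \<le> \<tau> y \<or> \<tau> y + g \<le> \<tau> x"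
  obtains x0 where "x0 \<in> I" "\<And>y. y \<in> I - {x0} \<Longrightarrow> \<tau> x0 + g \<le> \<tau> y"
proof -
  have "Min (\<tau> ` I) \<in> \<tau> ` I" using fin ne by (intro Min_in) auto
  then obtain x0 where x0: "x0 \<in> I" "\<tau> x0 = Min (\<tau> ` I)" by auto
  have "\<tau> x0 + g \<le> \<tau> y" if y: "y \<in> I - {x0}" for y
  proof -
    have "\<tau> x0 \<le> \<tau> y" unfolding x0(2) using fin y by auto
    then show ?thesis using sep[OF x0(1), of y] y by auto
  qed
  with x0(1) show ?thesis by (rule that)
qed

text \<open>One decorrelation step: a factor localised around \<open>\<tau> x0\<close> lies in the past of
  \<open>\<tau> x0 + s\<close>, while factors localised around times \<open>\<ge> \<tau> x0 + g\<close> lie in the future of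
  \<open>\<tau> x0 + g - s\<close>; so the first factor and the product of the others are almost uncorrelated.\<close>
lemma (in prob_space) mixing_cov_earliest:
  fixes F :: "int extended \<Rightarrow> int extended \<Rightarrow> 'a measure" and Z :: "'b \<Rightarrow> 'a \<Rightarrow> real"
    and \<tau> :: "'b \<Rightarrow> nat" and s g :: nat and B :: real
  assumes sub: "\<And>k l. subalgebra M (F k l)"
    and mono: "\<And>k l k' l'. k' \<le> k \<Longrightarrow> l \<le> l' \<Longrightarrow> sets (F k l) \<subseteq> sets (F k' l')"
    and s: "2 * s \<le> g" and fin: "finite J" and later: "\<And>y. y \<in> J \<Longrightarrow> \<tau> x0 + g \<le> \<tau> y"
    and meas: "\<And>x. x \<in> insert x0 J \<Longrightarrow>
      Z x \<in> borel_measurable (F (Fin (int (\<tau> x) - int s)) (Fin (int (\<tau> x) + int s)))"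
    and bounded: "\<And>x. x \<in> insert x0 J \<Longrightarrow> AE \<omega> in M. \<bar>Z x \<omega>\<bar> \<le> B"
  shows "\<bar>(\<integral>\<omega>. Z x0 \<omega> * (\<Prod>x\<in>J. Z x \<omega>) \<partial>M) - (\<integral>\<omega>. Z x0 \<omega> \<partial>M) * (\<integral>\<omega>. (\<Prod>x\<in>J. Z x \<omega>) \<partial>M)\<bar>
    \<le> 4 * alpha_mix M F (g - 2 * s) * B * B ^ card J"
proof -
  have spF: "\<And>k l. space (F k l) = space M" using sub by (auto simp: subalgebra_def)
  have subF: "\<And>k l k' l'. k' \<le> k \<Longrightarrow> l \<le> l' \<Longrightarrow> subalgebra (F k' l') (F k l)"
    using mono spF by (auto simp: subalgebra_def)
  define k where "k = int (\<tau> x0) + int s"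
  define G where "G = F Minf (Fin k)"
  define H where "H = F (Fin (k + int (g - 2 * s))) Pinf"
  have kH: "k + int (g - 2 * s) = int (\<tau> x0) + int g - int s" unfolding k_def using s by auto
  have GH: "subalgebra M G" "subalgebra M H" unfolding G_def H_def using sub by auto
  have Z0G: "Z x0 \<in> borel_measurable G"
    unfolding G_def k_def by (rule measurable_from_subalg[OF subF meas]) auto
  have ZH: "Z y \<in> borel_measurable H" if y: "y \<in> J" for y
  proof -
    have late: "\<tau> x0 + g \<le> \<tau> y" using later y .
    show ?thesis unfolding H_def kH
      by (rule measurable_from_subalg[OF subF meas]) (use y late in auto)
  qed
  have WH: "(\<lambda>\<omega>. \<Prod>x\<in>J. Z x \<omega>) \<in> borel_measurable H" by (rule borel_measurable_prod) (use ZH in auto)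
  have bW: "AE \<omega> in M. \<bar>\<Prod>x\<in>J. Z x \<omega>\<bar> \<le> B ^ card J"
    by (rule AE_abs_prod_le[OF fin]) (use bounded in auto)
  have mixGH: "\<And>A B. A \<in> sets G \<Longrightarrow> B \<in> sets H \<Longrightarrow>
      \<bar>prob (A \<inter> B) - prob A * prob B\<bar> \<le> alpha_mix M F (g - 2 * s)"
    unfolding G_def H_def by (rule alpha_mix_bound[OF sub]) (auto simp: k_def)
  have bZ0: "AE \<omega> in M. \<bar>Z x0 \<omega>\<bar> \<le> B" using bounded by simp
  show ?thesis by (rule mixing_cov_bound[OF GH mixGH Z0G WH bZ0 bW])
qed

text \<open>Induction on \<open>card I\<close>, splitting off the earliest factor.\<close>
lemma (in prob_space) mixing_prod_decorrelation:
  fixes F :: "int extended \<Rightarrow> int extended \<Rightarrow> 'a measure" and Z :: "'b \<Rightarrow> 'a \<Rightarrow> real"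
    and \<tau> :: "'b \<Rightarrow> nat" and s g :: nat and B :: real
  assumes sub: "\<And>k l. subalgebra M (F k l)"
    and mono: "\<And>k l k' l'. k' \<le> k \<Longrightarrow> l \<le> l' \<Longrightarrow> sets (F k l) \<subseteq> sets (F k' l')"
    and s: "2 * s \<le> g" and B0: "0 \<le> B"
  shows "finite I \<Longrightarrow> (\<And>x y. x\<in>I \<Longrightarrow> y\<in>I \<Longrightarrow> x\<noteq>y \<Longrightarrow> \<tau> x + g \<le> \<tau> y \<or> \<tau> y + g \<le> \<tau> x)
   \<Longrightarrow> (\<And>x. x\<in>I \<Longrightarrow> Z x \<in> borel_measurable (F (Fin (int (\<tau> x) - int s)) (Fin (int (\<tau> x) + int s))))
   \<Longrightarrow> (\<And>x. x\<in>I \<Longrightarrow> AE \<omega> in M. \<bar>Z x \<omega>\<bar> \<le> B)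
   \<Longrightarrow> \<bar>(\<integral>\<omega>. (\<Prod>x\<in>I. Z x \<omega>) \<partial>M) - (\<Prod>x\<in>I. \<integral>\<omega>. Z x \<omega> \<partial>M)\<bar>
         \<le> 4 * real (card I) * alpha_mix M F (g - 2 * s) * B ^ card I"
proof (induct "card I" arbitrary: I)
  case 0
  then show ?case by (simp add: prob_space)
next
  case (Suc n I)
  define \<alpha> where "\<alpha> = alpha_mix M F (g - 2 * s)"
  have "I \<noteq> {}" using Suc.hyps(2) by auto
  then obtain x0 where x0: "x0 \<in> I" and later: "\<And>y. y \<in> I - {x0} \<Longrightarrow> \<tau> x0 + g \<le> \<tau> y"
    by (rule earliest_separated[OF Suc.prems(1) _ Suc.prems(2)]) blast+
  define I' where "I' = I - {x0}"
  have cI': "card I' = n" and fI': "finite I'"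
    unfolding I'_def using Suc.hyps(2) x0 Suc.prems(1) by auto
  define W where "W = (\<lambda>\<omega>. \<Prod>x\<in>I'. Z x \<omega>)"
  have cov: "\<bar>(\<integral>\<omega>. Z x0 \<omega> * W \<omega> \<partial>M) - (\<integral>\<omega>. Z x0 \<omega> \<partial>M) * (\<integral>\<omega>. W \<omega> \<partial>M)\<bar> \<le> 4 * \<alpha> * B * B ^ n"
    unfolding W_def \<alpha>_def cI'[symmetric]
    by (rule mixing_cov_earliest[OF sub mono s fI']) (use x0 later Suc.prems(3,4) in \<open>auto simp: I'_def\<close>)
  have IH: "\<bar>(\<integral>\<omega>. W \<omega> \<partial>M) - (\<Prod>x\<in>I'. \<integral>\<omega>. Z x \<omega> \<partial>M)\<bar> \<le> 4 * real n * \<alpha> * B ^ n"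
    unfolding W_def \<alpha>_def cI'[symmetric]
    by (rule Suc.hyps(1)[OF cI'[symmetric] fI']) (use Suc.prems in \<open>auto simp: I'_def\<close>)
  have "Z x0 \<in> borel_measurable M" using Suc.prems(3)[OF x0] measurable_from_subalg[OF sub] by blast
  then have EZ0: "\<bar>\<integral>\<omega>. Z x0 \<omega> \<partial>M\<bar> \<le> B" by (rule abs_integral_le_const) (rule Suc.prems(4)[OF x0])
  have "\<bar>(\<integral>\<omega>. Z x0 \<omega> \<partial>M) * ((\<integral>\<omega>. W \<omega> \<partial>M) - (\<Prod>x\<in>I'. \<integral>\<omega>. Z x \<omega> \<partial>M))\<bar>
      \<le> B * (4 * real n * \<alpha> * B ^ n)"
    unfolding abs_mult by (rule mult_mono[OF EZ0 IH B0]) simp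
  with cov have "\<bar>(\<integral>\<omega>. Z x0 \<omega> * W \<omega> \<partial>M) - (\<integral>\<omega>. Z x0 \<omega> \<partial>M) * (\<Prod>x\<in>I'. \<integral>\<omega>. Z x \<omega> \<partial>M)\<bar>
      \<le> 4 * real (Suc n) * \<alpha> * B ^ Suc n"
    by (simp add: algebra_simps abs_le_iff)
  moreover have "(\<integral>\<omega>. (\<Prod>x\<in>I. Z x \<omega>) \<partial>M) = (\<integral>\<omega>. Z x0 \<omega> * W \<omega> \<partial>M)"
    "(\<Prod>x\<in>I. \<integral>\<omega>. Z x \<omega> \<partial>M) = (\<integral>\<omega>. Z x0 \<omega> \<partial>M) * (\<Prod>x\<in>I'. \<integral>\<omega>. Z x \<omega> \<partial>M)"
    unfolding W_def I'_def using Suc.prems(1) x0 by (simp_all add: prod.remove)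
  ultimately show ?case unfolding Suc.hyps(2)[symmetric] \<alpha>_def by simp
qed

lemma abs_prod_diff_le:
  fixes a b :: "'b \<Rightarrow> real"
  assumes "finite I" "\<And>i. i\<in>I \<Longrightarrow> \<bar>a i\<bar> \<le> B" "\<And>i. i\<in>I \<Longrightarrow> \<bar>b i\<bar> \<le> B" "1 \<le> B"
  shows "\<bar>(\<Prod>i\<in>I. a i) - (\<Prod>i\<in>I. b i)\<bar> \<le> B ^ card I * (\<Sum>i\<in>I. \<bar>a i - b i\<bar>)"
  using assms
proof (induct I rule: finite_induct)
  case empty
  then show ?case by simp
next
  case (insert x I)
  have pb: "\<bar>\<Prod>i\<in>I. b i\<bar> \<le> B ^ card I" using insert by (intro abs_prod_le_power) auto
  have IH: "\<bar>(\<Prod>i\<in>I. a i) - (\<Prod>i\<in>I. b i)\<bar> \<le> B ^ card I * (\<Sum>i\<in>I. \<bar>a i - b i\<bar>)"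
    using insert by auto
  have ax: "\<bar>a x\<bar> \<le> B" using insert by auto
  have e: "(\<Prod>i\<in>insert x I. a i) - (\<Prod>i\<in>insert x I. b i) = a x * ((\<Prod>i\<in>I. a i) - (\<Prod>i\<in>I. b i)) + (a x - b x) * (\<Prod>i\<in>I. b i)"
    using insert by (simp add: algebra_simps)
  have B0: "0 \<le> B" using insert by simp
  have S0: "0 \<le> (\<Sum>i\<in>I. \<bar>a i - b i\<bar>)" by (simp add: sum_nonneg)
  have pB: "B ^ card I \<le> B ^ Suc (card I)" using insert by simp
  have "\<bar>a x * ((\<Prod>i\<in>I. a i) - (\<Prod>i\<in>I. b i))\<bar> \<le> B * (B ^ card I * (\<Sum>i\<in>I. \<bar>a i - b i\<bar>))"
    unfolding abs_mult by (rule mult_mono[OF ax IH B0]) simp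
  moreover have "\<bar>(a x - b x) * (\<Prod>i\<in>I. b i)\<bar> \<le> \<bar>a x - b x\<bar> * B ^ Suc (card I)"
    unfolding abs_mult using pb pB by (intro mult_left_mono) auto
  ultimately have "\<bar>(\<Prod>i\<in>insert x I. a i) - (\<Prod>i\<in>insert x I. b i)\<bar> \<le> B ^ Suc (card I) * (\<Sum>i\<in>I. \<bar>a i - b i\<bar>) + \<bar>a x - b x\<bar> * B ^ Suc (card I)"
    unfolding e by (smt (verit, best) mult.assoc power_Suc)
  then show ?case using insert by (simp add: algebra_simps)
qed

lemma powr_add_one_le:
  fixes x c :: real
  assumes x: "0 \<le> x" and c: "0 < c" "c \<le> 1"
  shows "(x + 1) powr c \<le> x powr c + 1"
proof (cases "x = 0")
  case True then show ?thesis by simp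
next
  case False
  then have xp: "0 < x" using x by simp
  have "(x + 1) powr c = (x + 1) * (x + 1) powr (c - 1)"
    using xp by (simp add: powr_add[symmetric] powr_mult_base)
  also have "\<dots> = x * (x + 1) powr (c - 1) + (x + 1) powr (c - 1)" by (simp add: algebra_simps)
  also have "\<dots> \<le> x * x powr (c - 1) + 1"
  proof (rule add_mono)
    show "x * (x + 1) powr (c - 1) \<le> x * x powr (c - 1)"
      using xp c by (intro mult_left_mono powr_mono2') auto
    show "(x + 1) powr (c - 1) \<le> 1" using xp c by (smt (verit, best) powr_eq_one_iff powr_less_one)
  qed
  also have "x * x powr (c - 1) = x powr c" using xp by (simp add: powr_mult_base)
  finally show ?thesis .
qed

text \<open>For \<open>0 < c < 1\<close> every positive integer is of the form \<open>\<lfloor>n powr c\<rfloor>\<close> with \<open>n \<ge> k\<close>; this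
  lets condition (C4), which is stated at \<open>\<lfloor>n^(1-\<gamma>)\<rfloor>\<close>, be applied at every time \<open>k\<close>.\<close>
lemma floor_powr_surj:
  fixes c :: real and k :: nat
  assumes c: "0 < c" "c < 1" and k: "1 \<le> k"
  shows "\<exists>n::nat. nat \<lfloor>real n powr c\<rfloor> = k \<and> k \<le> n"
proof -
  define x where "x = real k powr (1 / c)"
  define n where "n = nat \<lceil>x\<rceil>"
  have x0: "0 \<le> x" unfolding x_def by simp
  have kx: "real k \<le> x" unfolding x_def using k c
    by (smt (verit, best) ge_one_powr_ge_zero le_divide_eq_1 log_powr_cancel of_nat_1_eq_iff of_nat_le_iff one_le_log_cancel_iff)
  have nx: "x \<le> real n" "real n < x + 1" unfolding n_def using x0 by linarith+
  have xc: "x powr c = real k" unfolding x_def using c by (simp add: powr_powr)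
  have lo: "real k \<le> real n powr c" using nx(1) x0 c xc by (metis powr_mono2 less_imp_le)
  have "real n powr c < (x + 1) powr c" using nx x0 c by (intro powr_less_mono2) auto
  also have "\<dots> \<le> x powr c + 1" using x0 c by (intro powr_add_one_le) auto
  finally have hi: "real n powr c < real k + 1" using xc by simp
  have "\<lfloor>real n powr c\<rfloor> = int k" using lo hi by (intro floor_unique) auto
  then have "nat \<lfloor>real n powr c\<rfloor> = k" by simp
  moreover have "k \<le> n" using kx nx by linarith
  ultimately show ?thesis by blast
qed

lemma average_shift_bound:
  fixes y :: "nat \<Rightarrow> real"
  assumes yb: "\<And>k. \<bar>y k\<bar> \<le> B" and m: "1 \<le> m" and mn: "m \<le> n"
  shows "\<bar>(1/real n) * (\<Sum>k=0..n. y k) - (1/real m) * (\<Sum>k=0..m. y k)\<bar> \<le> 3 * B * (real n - real m) / real m"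
proof -
  define A where "A = (\<Sum>k=0..m. y k)"
  define C where "C = (\<Sum>k\<in>{m<..n}. y k)"
  define d where "d = real n - real m"
  have B0: "0 \<le> B" using yb[of 0] by simp
  have d0: "0 \<le> d" unfolding d_def using mn by simp
  have mpos: "0 < real m" "0 < real n" using m mn by auto
  have split: "(\<Sum>k=0..n. y k) = A + C"
  proof -
    have "{0..n} = {0..m} \<union> {m<..n}" using mn by auto
    then show ?thesis unfolding A_def C_def by (simp add: sum.union_disjoint ivl_disj_int)
  qed
  have Ab: "\<bar>A\<bar> \<le> (real m + 1) * B"
  proof -
    have "\<bar>A\<bar> \<le> (\<Sum>k=0..m. \<bar>y k\<bar>)" unfolding A_def by (rule sum_abs)
    also have "\<dots> \<le> (\<Sum>k=0..m. B)" using yb by (intro sum_mono) auto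
    finally show ?thesis by (simp add: add.commute)
  qed
  have Cb: "\<bar>C\<bar> \<le> d * B"
  proof -
    have "\<bar>C\<bar> \<le> (\<Sum>k\<in>{m<..n}. \<bar>y k\<bar>)" unfolding C_def by (rule sum_abs)
    also have "\<dots> \<le> (\<Sum>k\<in>{m<..n}. B)" using yb by (intro sum_mono) auto
    also have "\<dots> = d * B" unfolding d_def using mn by (simp add: of_nat_diff)
    finally show ?thesis .
  qed
  have e: "(1/real n) * (A + C) - (1/real m) * A = C / real n - A * (d / (real n * real m))"
    unfolding d_def using mpos by (simp add: field_simps)
  have t1: "\<bar>C / real n\<bar> \<le> d * B / real m"
  proof -
    have "\<bar>C / real n\<bar> = \<bar>C\<bar> / real n" using mpos by simp
    also have "\<dots> \<le> d * B / real n" using Cb mpos by (intro divide_right_mono) auto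
    also have "\<dots> \<le> d * B / real m" using mpos mn d0 B0 by (intro divide_left_mono) auto
    finally show ?thesis .
  qed
  have t2: "\<bar>A * (d / (real n * real m))\<bar> \<le> 2 * B * d / real m"
  proof -
    have "\<bar>A * (d / (real n * real m))\<bar> = \<bar>A\<bar> * (d / (real n * real m))" using d0 mpos by (simp add: abs_mult)
    also have "\<dots> \<le> ((real m + 1) * B) * (d / (real n * real m))" using Ab d0 mpos by (intro mult_right_mono) auto
    also have "\<dots> \<le> (2 * real m * B) * (d / (real n * real m))" using m B0 d0 mpos
      by (intro mult_right_mono) (auto intro!: mult_right_mono)
    also have "\<dots> = 2 * B * d / real n" using mpos by (simp add: field_simps)
    also have "\<dots> \<le> 2 * B * d / real m" using mpos mn d0 B0 by (intro divide_left_mono) auto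
    finally show ?thesis .
  qed
  have "\<bar>C / real n - A * (d / (real n * real m))\<bar> \<le> d * B / real m + 2 * B * d / real m"
    using t1 t2 by (smt (verit))
  also have "\<dots> = 3 * B * d / real m" by (simp add: field_simps)
  finally show ?thesis unfolding split A_def[symmetric] e d_def .
qed

lemma tendsto_zero_blockwise:
  fixes u w :: "nat \<Rightarrow> real"
  assumes P: "1 \<le> P" and w: "w \<longlonglongrightarrow> 0"
    and b: "\<And>i n. 1 \<le> i \<Longrightarrow> i ^ P \<le> n \<Longrightarrow> n < (i+1) ^ P \<Longrightarrow> \<bar>u n\<bar> \<le> w i"
  shows "u \<longlonglongrightarrow> 0"
proof (rule LIMSEQ_I)
  fix r :: real assume r: "0 < r"
  from LIMSEQ_D[OF w r] obtain I0 where I0: "\<And>i. i \<ge> I0 \<Longrightarrow> norm (w i - 0) < r" by blast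
  define I where "I = max I0 1"
  show "\<exists>no. \<forall>n\<ge>no. norm (u n - 0) < r"
  proof (intro exI allI impI)
    fix n assume n: "I ^ P \<le> n"
    define A where "A = {i. i ^ P \<le> n}"
    have Asub: "A \<subseteq> {..n}"
    proof
      fix i assume "i \<in> A"
      then have "i ^ P \<le> n" unfolding A_def by simp
      moreover have "i \<le> i ^ P" using P by (cases "i = 0") (auto intro: self_le_power)
      ultimately show "i \<in> {..n}" by simp
    qed
    have fA: "finite A" using Asub finite_subset by blast
    have IA: "I \<in> A" unfolding A_def using n by simp
    define i where "i = Max A"
    have iA: "i \<in> A" unfolding i_def using fA IA by (intro Max_in) auto
    have Ii: "I \<le> i" unfolding i_def using fA IA by simp
    have hi: "n < (i+1) ^ P"
    proof (rule ccontr)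
      assume "\<not> n < (i+1) ^ P"
      then have "i + 1 \<in> A" unfolding A_def by simp
      then have "i + 1 \<le> i" unfolding i_def using fA by simp
      then show False by simp
    qed
    have i1: "1 \<le> i" using Ii unfolding I_def by simp
    have "\<bar>u n\<bar> \<le> w i" using b[OF i1 _ hi] iA unfolding A_def by simp
    also have "\<dots> < r" using I0[of i] Ii unfolding I_def by auto
    finally show "norm (u n - 0) < r" by simp
  qed
qed

lemma relative_block_length_tendsto_zero:
  assumes P: "1 \<le> P"
  shows "(\<lambda>i::nat. ((real i + 1) ^ P - real i ^ P) / real i ^ P) \<longlonglongrightarrow> 0"
proof -
  have "(\<lambda>i::nat. (1 + 1 / real i) ^ P - 1) \<longlonglongrightarrow> (1 + 0) ^ P - 1"
    by (intro tendsto_intros lim_1_over_n)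
  then have l: "(\<lambda>i::nat. (1 + 1 / real i) ^ P - 1) \<longlonglongrightarrow> 0" by simp
  have ev: "eventually (\<lambda>i::nat. (1 + 1 / real i) ^ P - 1 = ((real i + 1) ^ P - real i ^ P) / real i ^ P) sequentially"
    using eventually_gt_at_top[of "0::nat"]
  proof eventually_elim
    case (elim i)
    then have "(1 + 1 / real i) = (real i + 1) / real i" by (simp add: field_simps)
    then show ?case using elim by (simp add: power_divide field_simps)
  qed
  show ?thesis using Lim_transform_eventually[OF l ev] .
qed

lemma (in prob_space) AE_tendsto_zero_of_summable_integrals:
  fixes h :: "nat \<Rightarrow> 'a \<Rightarrow> real"
  assumes hm: "\<And>i. h i \<in> borel_measurable M" and h0: "\<And>i \<omega>. 0 \<le> h i \<omega>"
    and hi: "\<And>i. integrable M (h i)" and s: "summable (\<lambda>i. \<integral>\<omega>. h i \<omega> \<partial>M)"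
  shows "AE \<omega> in M. (\<lambda>i. h i \<omega>) \<longlonglongrightarrow> 0"
proof -
  have "(\<integral>\<^sup>+ \<omega>. (\<Sum>i. ennreal (h i \<omega>)) \<partial>M) = (\<Sum>i. \<integral>\<^sup>+ \<omega>. ennreal (h i \<omega>) \<partial>M)"
    by (rule nn_integral_suminf) (use hm in auto)
  also have "\<dots> = (\<Sum>i. ennreal (\<integral>\<omega>. h i \<omega> \<partial>M))"
    by (intro suminf_cong nn_integral_eq_integral hi) (use h0 in auto)
  also have "\<dots> = ennreal (\<Sum>i. \<integral>\<omega>. h i \<omega> \<partial>M)"
    by (rule suminf_ennreal2) (use h0 s in \<open>auto intro: integral_nonneg_AE\<close>)
  finally have "(\<integral>\<^sup>+ \<omega>. (\<Sum>i. ennreal (h i \<omega>)) \<partial>M) \<noteq> \<infinity>" by simp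
  then have "AE \<omega> in M. (\<Sum>i. ennreal (h i \<omega>)) \<noteq> \<infinity>"
    by (intro nn_integral_noteq_infinite) (use hm in auto)
  then show ?thesis
  proof eventually_elim
    case (elim \<omega>)
    then have "summable (\<lambda>i. h i \<omega>)" using h0 by (intro summable_suminf_not_top) auto
    then show ?case by (rule summable_LIMSEQ_zero)
  qed
qed

lemma summable_exp_div3:
  fixes \<kappa> :: real assumes k: "0 < \<kappa>"
  shows "summable (\<lambda>i::nat. exp (- \<kappa> * real (i div 3)) / \<kappa>)"
proof (rule summable_comparison_test')
  show "summable (\<lambda>i::nat. exp \<kappa> / \<kappa> * exp (- \<kappa> / 3) ^ i)"
    by (intro summable_mult summable_geometric) (use k in auto)
  fix i :: nat
  have "real i \<le> 3 * real (i div 3) + 3" by linarith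
  then have "\<kappa> * real i \<le> \<kappa> * (3 * real (i div 3) + 3)" using k by (intro mult_left_mono) auto
  then have "- \<kappa> * real (i div 3) \<le> \<kappa> + real i * (- \<kappa> / 3)" by (simp add: field_simps)
  then have "exp (- \<kappa> * real (i div 3)) \<le> exp (\<kappa> + real i * (- \<kappa> / 3))" by simp
  also have "\<dots> = exp \<kappa> * exp (- \<kappa> / 3) ^ i" by (simp only: exp_add exp_of_nat_mult[symmetric])
  finally show "norm (exp (- \<kappa> * real (i div 3)) / \<kappa>) \<le> exp \<kappa> / \<kappa> * exp (- \<kappa> / 3) ^ i"
    using k by (simp add: divide_right_mono)
qed

section \<open>Separation of the times \<open>q\<^sub>j(k)\<close>\<close>

locale admissible_times =
  fixes L :: nat and q :: "nat \<Rightarrow> nat \<Rightarrow> nat" and r p :: nat and \<gamma> :: real and n0 :: nat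
  assumes rpos: "r > 0" and q1: "\<And>n. q 1 n = r * n + p"
    and gam: "0 < \<gamma>" "\<gamma> < 1" and n0: "n0 > 1"
    and C3: "\<And>n j. n \<ge> n0 \<Longrightarrow> j \<in> {2..L} \<Longrightarrow> real (q j (n + 1)) \<ge> real (q j n) + real n powr \<gamma>"
    and C4: "\<And>n j. n \<ge> n0 \<Longrightarrow> j \<in> {1..<L} \<Longrightarrow>
      real (q (j + 1) (nat \<lfloor>real n powr (1 - \<gamma>)\<rfloor>)) \<ge> real (q j n) * real n powr \<gamma>"
begin

lemma q_strict_step: "j \<in> {1..L} \<Longrightarrow> n0 \<le> m \<Longrightarrow> q j m < q j (Suc m)"
proof -
  assume j: "j \<in> {1..L}" and m: "n0 \<le> m"
  show ?thesis
  proof (cases "j = 1")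
    case True then show ?thesis using q1 rpos by simp
  next
    case False
    then have "j \<in> {2..L}" using j by auto
    from C3[OF m this] have "real (q j (m + 1)) \<ge> real (q j m) + real m powr \<gamma>" .
    moreover have "real m powr \<gamma> > 0" using m n0 by simp
    ultimately have "real (q j m) < real (q j (m + 1))" by linarith
    then show ?thesis by simp
  qed
qed

lemma q_strict_mono: "j \<in> {1..L} \<Longrightarrow> n0 \<le> m \<Longrightarrow> m < m' \<Longrightarrow> q j m < q j m'"
proof (induct m')
  case 0 then show ?case by simp
next
  case (Suc m')
  show ?case
  proof (cases "m < m'")
    case True
    then have "q j m < q j m'" using Suc by auto
    also have "\<dots> < q j (Suc m')" using q_strict_step[OF Suc(2)] Suc(3) True by simp
    finally show ?thesis .
  next
    case False
    then have "m = m'" using Suc(4) by simp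
    then show ?thesis using q_strict_step[OF Suc(2) Suc(3)] by simp
  qed
qed

lemma q_mono: "j \<in> {1..L} \<Longrightarrow> n0 \<le> m \<Longrightarrow> m \<le> m' \<Longrightarrow> q j m \<le> q j m'"
  using q_strict_mono[of j m m'] by (cases "m = m'") auto

lemma q_ratio:
  assumes k: "n0 \<le> k" and i: "i \<in> {1..<L}"
  shows "real (q (i+1) k) \<ge> real (q i k) * real k powr \<gamma>"
proof -
  have k1: "1 \<le> k" using k n0 by simp
  obtain n' where n': "nat \<lfloor>real n' powr (1 - \<gamma>)\<rfloor> = k" "k \<le> n'"
    using floor_powr_surj[of "1 - \<gamma>" k] gam k1 by auto
  have n0': "n0 \<le> n'" using n' k by simp
  from C4[OF n0' i] n'(1) have c4: "real (q (i + 1) k) \<ge> real (q i n') * real n' powr \<gamma>" by simp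
  have "q i k \<le> q i n'" using i k n' by (intro q_mono) auto
  moreover have "real k powr \<gamma> \<le> real n' powr \<gamma>" using n' gam by (intro powr_mono2) auto
  ultimately have "real (q i k) * real k powr \<gamma> \<le> real (q i n') * real n' powr \<gamma>"
    by (intro mult_mono) auto
  with c4 show ?thesis by simp
qed

lemma q_pos: "n0 \<le> k \<Longrightarrow> i \<in> {1..L} \<Longrightarrow> 1 \<le> q i k"
proof (induct i)
  case 0 then show ?case by simp
next
  case (Suc i)
  show ?case
  proof (cases "i = 0")
    case True
    have "1 \<le> r * k" using rpos Suc(2) n0 by (simp add: one_le_mult_iff)
    moreover have "q (Suc 0) k = r*k+p" using q1[of k] by simp
    ultimately show ?thesis using True by (metis One_nat_def le_add1 order_trans)
  next
    case False
    then have i: "i \<in> {1..<L}" using Suc(3) by auto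
    have k1: "1 \<le> real k powr \<gamma>" using Suc(2) n0 gam by (simp add: ge_one_powr_ge_zero)
    have "1 \<le> q i k" using Suc i by auto
    then have "real 1 \<le> real (q i k) * real k powr \<gamma>" using k1 by (simp add: mult_ge1_I)
    also have "\<dots> \<le> real (q (Suc i) k)" using q_ratio[OF Suc(2) i] by simp
    finally show ?thesis by linarith
  qed
qed

lemma q_gap:
  assumes k: "n0 \<le> k" and kg: "real k powr \<gamma> \<ge> real g + 1" and i: "i \<in> {1..<L}"
  shows "q i k + g \<le> q (i+1) k"
proof -
  have qi: "1 \<le> q i k" using q_pos[OF k] i by auto
  have "real (q i k) * (real g + 1) \<le> real (q i k) * real k powr \<gamma>" using kg by (intro mult_left_mono) auto
  also have "\<dots> \<le> real (q (i+1) k)" by (rule q_ratio[OF k i])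
  finally have "real (q i k) * real g + real (q i k) \<le> real (q (i+1) k)" by (simp add: algebra_simps)
  moreover have "real g \<le> real (q i k) * real g" using qi by (simp add: mult_le_cancel_right1)
  ultimately show ?thesis by linarith
qed

lemma q_gap_trans:
  assumes k: "n0 \<le> k" and kg: "real k powr \<gamma> \<ge> real g + 1" and i: "1 \<le> i"
  shows "i + 1 + d \<le> L \<Longrightarrow> q i k + g \<le> q (i + 1 + d) k"
proof (induct d)
  case 0 then show ?case using q_gap[OF k kg, of i] i by auto
next
  case (Suc d)
  then have a: "q i k + g \<le> q (i + 1 + d) k" by simp
  have "q (i + 1 + d) k + g \<le> q (i + 1 + d + 1) k" using Suc(2) i by (intro q_gap[OF k kg]) auto
  with a show ?case by simp
qed

definition separated :: "nat \<Rightarrow> nat \<Rightarrow> bool" where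
  "separated k g \<longleftrightarrow> (\<forall>i\<in>{1..L}. \<forall>j\<in>{1..L}. i \<noteq> j \<longrightarrow> q i k + g \<le> q j k \<or> q j k + g \<le> q i k)"

lemma separated_eventually:
  assumes k: "n0 \<le> k" and kg: "real k powr \<gamma> \<ge> real g + 1"
  shows "separated k g"
  unfolding separated_def
proof (intro ballI impI)
  fix i j assume i: "i \<in> {1..L}" and j: "j \<in> {1..L}" and ij: "i \<noteq> j"
  show "q i k + g \<le> q j k \<or> q j k + g \<le> q i k"
  proof (cases "i < j")
    case True
    then obtain d where "j = i + 1 + d" by (metis add.assoc less_iff_Suc_add Suc_eq_plus1_left add.commute)
    then show ?thesis using q_gap_trans[OF k kg, of i d] i j by auto
  next
    case False
    then have "j < i" using ij by simp
    then obtain d where "i = j + 1 + d" by (metis add.assoc less_iff_Suc_add Suc_eq_plus1_left add.commute)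
    then show ?thesis using q_gap_trans[OF k kg, of j d] i j by auto
  qed
qed

text \<open>An exponent \<open>P \<ge> 1/\<gamma>\<close>: for \<open>k \<ge> (g+1)^P\<close> we have \<open>k^\<gamma> \<ge> g + 1\<close>.\<close>
definition sep_exp :: nat where
  "sep_exp = nat \<lceil>1 / \<gamma>\<rceil>"

lemma sep_exp_ge_1: "1 \<le> sep_exp"
proof -
  have "1 < 1 / \<gamma>" using gam by simp
  then show ?thesis unfolding sep_exp_def by linarith
qed

lemma sep_exp_gamma: "1 \<le> real sep_exp * \<gamma>"
proof -
  have "1 / \<gamma> \<le> real sep_exp" unfolding sep_exp_def by linarith
  then show ?thesis using gam by (simp add: field_simps)
qed

lemma powr_gamma_ge:
  assumes k: "(g + 1) ^ sep_exp \<le> k"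
  shows "real g + 1 \<le> real k powr \<gamma>"
proof -
  have "real g + 1 = (real g + 1) powr 1" by simp
  also have "\<dots> \<le> (real g + 1) powr (real sep_exp * \<gamma>)" using sep_exp_gamma by (intro powr_mono) auto
  also have "\<dots> = ((real g + 1) ^ sep_exp) powr \<gamma>" by (simp add: powr_powr[symmetric] powr_realpow)
  also have "\<dots> \<le> real k powr \<gamma>"
  proof -
    have "real ((g+1)^sep_exp) \<le> real k" using k by (simp only: of_nat_le_iff)
    then have "(real g + 1) ^ sep_exp \<le> real k" by (simp add: add.commute)
    then show ?thesis using gam by (intro powr_mono2) auto
  qed
  finally show ?thesis .
qed

text \<open>By strict monotonicity, at most \<open>2g + n0\<close> indices \<open>m \<le> n\<close> put \<open>q\<^sub>j(m)\<close> within
  distance \<open>g\<close> of a given point.\<close>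
lemma near_times_card:
  assumes j: "j \<in> {1..L}"
  shows "card {m\<in>{0..n}. t < q j m + g \<and> q j m < t + g} \<le> 2*g + n0"
proof -
  define S where "S = {m\<in>{0..n}. t < q j m + g \<and> q j m < t + g}"
  define S1 where "S1 = {m\<in>S. m < n0}"
  define S2 where "S2 = {m\<in>S. n0 \<le> m}"
  have SU: "S = S1 \<union> S2" unfolding S1_def S2_def by auto
  have c1: "card S1 \<le> n0"
  proof -
    have "S1 \<subseteq> {0..<n0}" unfolding S1_def by auto
    then show ?thesis by (metis card_atLeastLessThan card_mono finite_atLeastLessThan diff_zero)
  qed
  have inj: "inj_on (q j) S2"
  proof (rule inj_onI)
    fix x y assume x: "x \<in> S2" and y: "y \<in> S2" and e: "q j x = q j y"
    show "x = y"
    proof (rule ccontr)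
      assume "x \<noteq> y"
      then have "x < y \<or> y < x" by auto
      moreover have "n0 \<le> x" "n0 \<le> y" using x y unfolding S2_def by auto
      ultimately show False using q_strict_mono[OF j, of x y] q_strict_mono[OF j, of y x] e by auto
    qed
  qed
  have "q j ` S2 \<subseteq> {t - g..<t + g}" unfolding S2_def S_def by auto
  then have "card (q j ` S2) \<le> card {t - g..<t + g}" by (intro card_mono) auto
  also have "\<dots> \<le> 2 * g" by simp
  finally have c2: "card S2 \<le> 2 * g" using card_image[OF inj] by simp
  have "card S \<le> card S1 + card S2" unfolding SU by (rule card_Un_le)
  then show ?thesis using c1 c2 unfolding S_def by simp
qed

lemma nonseparated_card: "card {k\<in>{0..n}. \<not> separated k g} \<le> n0 + (g+1)^sep_exp"
proof -
  have "{k\<in>{0..n}. \<not> separated k g} \<subseteq> {0..<n0 + (g+1)^sep_exp}"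
  proof
    fix k assume k: "k \<in> {k\<in>{0..n}. \<not> separated k g}"
    show "k \<in> {0..<n0 + (g+1)^sep_exp}"
    proof (rule ccontr)
      assume "k \<notin> {0..<n0 + (g+1)^sep_exp}"
      then have "n0 \<le> k" "(g+1)^sep_exp \<le> k" by auto
      then have "separated k g" using separated_eventually powr_gamma_ge by blast
      then show False using k by simp
    qed
  qed
  then show ?thesis by (metis card_atLeastLessThan card_mono finite_atLeastLessThan diff_zero)
qed

definition cross_separated :: "nat \<Rightarrow> nat \<Rightarrow> nat \<Rightarrow> bool" where
  "cross_separated k m g \<longleftrightarrow> (\<forall>i\<in>{1..L}. \<forall>j\<in>{1..L}. q i k + g \<le> q j m \<or> q j m + g \<le> q i k)"

definition good_pair :: "nat \<Rightarrow> nat \<Rightarrow> nat \<Rightarrow> bool" where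
  "good_pair k m g \<longleftrightarrow> separated k g \<and> separated m g \<and> cross_separated k m g"

definition pair_time :: "nat \<Rightarrow> nat \<Rightarrow> nat \<times> nat \<Rightarrow> nat" where
  "pair_time k m x = (if snd x = 0 then q (fst x) k else q (fst x) m)"

lemma good_pair_separated:
  assumes good: "good_pair k m g" and x: "x \<in> {1..L} \<times> {0, 1}" and y: "y \<in> {1..L} \<times> {0, 1}"
    and xy: "x \<noteq> y"
  shows "pair_time k m x + g \<le> pair_time k m y \<or> pair_time k m y + g \<le> pair_time k m x"
proof -
  obtain j c j' c' where xy': "x = (j, c)" "y = (j', c')" by (cases x, cases y)
  have j: "j \<in> {1..L}" "j' \<in> {1..L}" using x y xy' by auto
  from good have s: "separated k g" "separated m g" "cross_separated k m g"
    unfolding good_pair_def by auto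
  have cross: "q j k + g \<le> q j' m \<or> q j' m + g \<le> q j k" "q j' k + g \<le> q j m \<or> q j m + g \<le> q j' k"
    using s(3) j unfolding cross_separated_def by auto
  consider "c = 0" "c' = 0" | "c = 0" "c' = 1" | "c = 1" "c' = 0" | "c = 1" "c' = 1"
    using x y xy' by auto
  then show ?thesis
  proof cases
    case 1
    then show ?thesis using s(1) j xy xy' unfolding separated_def pair_time_def by auto
  next
    case 4
    then show ?thesis using s(2) j xy xy' unfolding separated_def pair_time_def by auto
  qed (use cross xy' in \<open>auto simp: pair_time_def\<close>)
qed

definition near_pairs :: "nat \<Rightarrow> nat \<Rightarrow> (nat \<times> nat) set" where
  "near_pairs n g = (\<Union>k\<in>{0..n}. \<Union>i\<in>{1..L}. \<Union>j\<in>{1..L}.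
     {k} \<times> {m\<in>{0..n}. q i k < q j m + g \<and> q j m < q i k + g})"

lemma near_pairs_card: "card (near_pairs n g) \<le> (n + 1) * (L * (L * (2 * g + n0)))"
proof -
  let ?A = "\<lambda>k i j. {k} \<times> {m\<in>{0..n}. q i k < q j m + g \<and> q j m < q i k + g}"
  have "card (near_pairs n g) \<le> (\<Sum>k\<in>{0..n}. card (\<Union>i\<in>{1..L}. \<Union>j\<in>{1..L}. ?A k i j))"
    unfolding near_pairs_def by (rule card_UN_le) simp
  also have "\<dots> \<le> (\<Sum>k\<in>{0..n}. \<Sum>i\<in>{1..L}. card (\<Union>j\<in>{1..L}. ?A k i j))"
    by (intro sum_mono card_UN_le) simp
  also have "\<dots> \<le> (\<Sum>k\<in>{0..n}. \<Sum>i\<in>{1..L}. \<Sum>j\<in>{1..L}. card (?A k i j))"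
    by (intro sum_mono card_UN_le) simp
  also have "\<dots> \<le> (\<Sum>k\<in>{0..n}. \<Sum>i\<in>{1..L}. \<Sum>j\<in>{1..L}. 2 * g + n0)"
    by (intro sum_mono) (use near_times_card in \<open>auto simp: card_cartesian_product\<close>)
  finally show ?thesis by simp
qed

definition bad_pairs :: "nat \<Rightarrow> nat \<Rightarrow> (nat \<times> nat) set" where
  "bad_pairs n g = {x \<in> {0..n} \<times> {0..n}. \<not> good_pair (fst x) (snd x) g}"

text \<open>A bad pair either has a non-separated coordinate or is a near pair.\<close>
lemma bad_pairs_card_le:
  "card (bad_pairs n g) \<le> 2 * (n + 1) * (n0 + (g + 1) ^ sep_exp) + (n + 1) * (L * (L * (2 * g + n0)))"
proof -
  define N where "N = {k\<in>{0..n}. \<not> separated k g}"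
  have sub: "bad_pairs n g \<subseteq> (N \<times> {0..n} \<union> {0..n} \<times> N) \<union> near_pairs n g"
  proof
    fix x assume x: "x \<in> bad_pairs n g"
    obtain k m where km: "x = (k, m)" by (cases x)
    have kn: "k \<in> {0..n}" "m \<in> {0..n}" using x km unfolding bad_pairs_def by auto
    show "x \<in> (N \<times> {0..n} \<union> {0..n} \<times> N) \<union> near_pairs n g"
    proof (cases "separated k g \<and> separated m g")
      case True
      then have "\<not> cross_separated k m g" using x km unfolding bad_pairs_def good_pair_def by auto
      then obtain i j where ij: "i\<in>{1..L}" "j\<in>{1..L}" "\<not> (q i k + g \<le> q j m \<or> q j m + g \<le> q i k)"
        unfolding cross_separated_def by auto
      have "(k, m) \<in> {k} \<times> {m\<in>{0..n}. q i k < q j m + g \<and> q j m < q i k + g}" using ij kn by auto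
      then show ?thesis unfolding near_pairs_def km using ij kn by blast
    next
      case False
      then show ?thesis using kn km unfolding N_def by auto
    qed
  qed
  have cN: "card N \<le> n0 + (g + 1) ^ sep_exp" unfolding N_def by (rule nonseparated_card)
  have "card (N \<times> {0..n} \<union> {0..n} \<times> N) \<le> card (N \<times> {0..n}) + card ({0..n} \<times> N)"
    by (rule card_Un_le)
  also have "\<dots> = 2 * (card N * (n + 1))" by (simp add: card_cartesian_product)
  also have "\<dots> \<le> 2 * ((n0 + (g + 1) ^ sep_exp) * (n + 1))"
    using cN by (intro mult_le_mono2 mult_le_mono1)
  finally have c12: "card (N \<times> {0..n} \<union> {0..n} \<times> N) \<le> 2 * (n + 1) * (n0 + (g + 1) ^ sep_exp)"
    by (simp add: algebra_simps)
  have "card (bad_pairs n g) \<le> card ((N \<times> {0..n} \<union> {0..n} \<times> N) \<union> near_pairs n g)"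
    by (rule card_mono[OF _ sub]) (auto simp: N_def near_pairs_def)
  also have "\<dots> \<le> card (N \<times> {0..n} \<union> {0..n} \<times> N) + card (near_pairs n g)" by (rule card_Un_le)
  finally show ?thesis using c12 near_pairs_card[of n g] by linarith
qed

definition bad_const :: nat where
  "bad_const = 2 * (n0 + 1) + L * (L * (2 + n0))"

lemma bad_pairs_card: "real (card (bad_pairs n g)) \<le> (real n + 1) * real bad_const * (real g + 1)^sep_exp"
proof -
  define R where "R = (g+1)^sep_exp"
  have R1: "1 \<le> R" unfolding R_def by simp
  have Rg: "g + 1 \<le> R" unfolding R_def using sep_exp_ge_1 by (intro self_le_power) auto
  have h1: "n0 + R \<le> (n0+1)*R" using R1 by (simp add: algebra_simps)
  have "2*g \<le> 2*R" using Rg by simp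
  moreover have "n0 \<le> n0*R" using R1 by simp
  ultimately have "2*g + n0 \<le> 2*R + n0*R" by (rule add_mono)
  then have h2: "2*g + n0 \<le> (2+n0)*R" by (simp add: distrib_right)
  have "card (bad_pairs n g) \<le> 2*(n+1)*(n0 + R) + (n+1)*(L*(L*(2*g+n0)))"
    using bad_pairs_card_le unfolding R_def .
  also have "\<dots> \<le> 2*(n+1)*((n0+1)*R) + (n+1)*(L*(L*((2+n0)*R)))"
    using h1 h2 by (intro add_mono mult_le_mono2) auto
  also have "\<dots> = (n+1)*bad_const*R" unfolding bad_const_def by (simp add: algebra_simps)
  finally have "real (card (bad_pairs n g)) \<le> real ((n+1)*bad_const*R)" by (simp only: of_nat_le_iff)
  then show ?thesis unfolding R_def by (simp add: add.commute distrib_right)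
qed

end

section \<open>Products of mixing processes at separated times\<close>

locale mixing_processes = prob_space M for M :: "'a measure" +
  fixes L :: nat and X :: "nat \<Rightarrow> nat \<Rightarrow> 'a \<Rightarrow> real" and D :: real
    and F :: "int extended \<Rightarrow> int extended \<Rightarrow> 'a measure" and \<kappa> :: real
  assumes L1: "L \<ge> 1"
    and rv: "\<And>j n. j \<in> {1..L} \<Longrightarrow> X j n \<in> borel_measurable M"
    and stat: "\<And>j. j \<in> {1..L} \<Longrightarrow> stationary_proc M (X j)"
    and bnd: "\<And>j n. j \<in> {1..L} \<Longrightarrow> AE \<omega> in M. \<bar>X j n \<omega>\<bar> \<le> D"
    and sub: "\<And>k l. subalgebra M (F k l)"
    and mono: "\<And>k l k' l'. k' \<le> k \<Longrightarrow> l \<le> l' \<Longrightarrow> sets (F k l) \<subseteq> sets (F k' l')"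
    and kap: "\<kappa> > 0"
    and C1: "\<And>n. alpha_mix M F n + Max ((\<lambda>j. beta_approx M F (X j) n) ` {1..L})
      \<le> exp (- \<kappa> * real n) / \<kappa>"
begin

text \<open>A bound \<open>\<ge> 1\<close> on all \<open>|X\<^sub>j|\<close>, convenient for bounding products.\<close>
definition D1 :: real where "D1 = max D 1"

lemma D1_ge_1: "1 \<le> D1" unfolding D1_def by simp

lemma bnd_D1: "j \<in> {1..L} \<Longrightarrow> AE \<omega> in M. \<bar>X j n \<omega>\<bar> \<le> D1"
  using bnd[of j n] unfolding D1_def by (auto elim: eventually_mono)

lemma integrable_X: "j \<in> {1..L} \<Longrightarrow> integrable M (X j n)"
  by (rule integrable_const_bound) (use bnd_D1[of j n] rv[of j n] in auto)

lemma integral_stationary: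
  assumes j: "j \<in> {1..L}"
  shows "(\<integral>\<omega>. X j t \<omega> \<partial>M) = (\<integral>\<omega>. X j 0 \<omega> \<partial>M)"
proof -
  have rvj[measurable]: "\<And>n. X j n \<in> borel_measurable M" using rv[OF j] .
  have e: "distr M (Pi\<^sub>M UNIV (\<lambda>_. borel)) (\<lambda>\<omega> n. X j (n + t) \<omega>) = distr M (Pi\<^sub>M UNIV (\<lambda>_. borel)) (\<lambda>\<omega> n. X j n \<omega>)"
    using stat[OF j] unfolding stationary_proc_def by blast
  have m1: "(\<lambda>\<omega> n. X j (n + t) \<omega>) \<in> M \<rightarrow>\<^sub>M Pi\<^sub>M UNIV (\<lambda>_. borel)"
    by (rule measurable_PiM_single') auto
  have m2: "(\<lambda>\<omega> n. X j n \<omega>) \<in> M \<rightarrow>\<^sub>M Pi\<^sub>M UNIV (\<lambda>_. borel)"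
    by (rule measurable_PiM_single') auto
  have m0: "(\<lambda>f. f 0) \<in> Pi\<^sub>M UNIV (\<lambda>_. borel) \<rightarrow>\<^sub>M (borel::real measure)" by measurable
  have "distr M borel (X j t) = distr (distr M (Pi\<^sub>M UNIV (\<lambda>_. borel)) (\<lambda>\<omega> n. X j (n + t) \<omega>)) borel (\<lambda>f. f 0)"
    by (subst distr_distr[OF m0 m1]) (simp add: comp_def)
  also have "\<dots> = distr M borel (X j 0)"
    unfolding e by (subst distr_distr[OF m0 m2]) (simp add: comp_def)
  finally have d: "distr M borel (X j t) = distr M borel (X j 0)" .
  have "(\<integral>\<omega>. X j t \<omega> \<partial>M) = (\<integral>x. x \<partial>distr M borel (X j t))" by (simp add: integral_distr)
  also have "\<dots> = (\<integral>\<omega>. X j 0 \<omega> \<partial>M)" unfolding d by (simp add: integral_distr)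
  finally show ?thesis .
qed

abbreviation CE :: "nat \<Rightarrow> nat \<Rightarrow> nat \<Rightarrow> 'a \<Rightarrow> real" where
  "CE j t s \<equiv> real_cond_exp M (F (Fin (int t - int s)) (Fin (int t + int s))) (X j t)"

lemma CE_M[measurable]: "CE j t n \<in> borel_measurable M"
  by simp

lemma CE_bound: "j \<in> {1..L} \<Longrightarrow> AE \<omega> in M. \<bar>CE j t n \<omega>\<bar> \<le> D1"
  by (rule cond_exp_abs_bound[OF sub rv bnd_D1])

lemma integrable_CE: "j \<in> {1..L} \<Longrightarrow> integrable M (CE j t n)"
  by (rule integrable_const_bound) (use CE_bound[of j t n] in auto)

lemma integral_CE: "j \<in> {1..L} \<Longrightarrow> (\<integral>\<omega>. CE j t n \<omega> \<partial>M) = (\<integral>\<omega>. X j 0 \<omega> \<partial>M)"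
proof -
  assume j: "j \<in> {1..L}"
  interpret sG: sigma_finite_subalgebra M "F (Fin (int t - int n)) (Fin (int t + int n))" using sigma_finite_subalgebra_of_subalgebra[OF sub] .
  show ?thesis using sG.real_cond_exp_int(2)[OF integrable_X[OF j]] integral_stationary[OF j] by simp
qed

lemma CE_error_bounded: "j \<in> {1..L} \<Longrightarrow> \<bar>\<integral>\<omega>. \<bar>X j t \<omega> - CE j t n \<omega>\<bar> \<partial>M\<bar> \<le> 2 * D1"
proof -
  assume j: "j \<in> {1..L}"
  have [measurable]: "X j t \<in> borel_measurable M" using rv[OF j] .
  show ?thesis
    by (rule abs_integral_le_const) (use bnd_D1[OF j, of t] CE_bound[OF j, of t n] in \<open>auto elim!: eventually_elim2\<close>)
qed

lemma CE_error_le_beta: "j \<in> {1..L} \<Longrightarrow> (\<integral>\<omega>. \<bar>X j t \<omega> - CE j t n \<omega>\<bar> \<partial>M) \<le> beta_approx M F (X j) n"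
  unfolding beta_approx_def
proof (rule cSUP_upper)
  assume j: "j \<in> {1..L}"
  show "bdd_above ((\<lambda>m. \<integral>\<omega>. \<bar>X j m \<omega> - CE j m n \<omega>\<bar> \<partial>M) ` UNIV)"
    by (rule bdd_aboveI2[where M="2*D1"]) (use CE_error_bounded[OF j] in \<open>auto simp: abs_le_iff\<close>)
qed simp

lemma beta_nonneg: "j \<in> {1..L} \<Longrightarrow> 0 \<le> beta_approx M F (X j) n"
  using CE_error_le_beta[of j 0 n] by (smt (verit) integral_nonneg_AE abs_ge_zero AE_I2)

lemma alpha_exp_bound: "alpha_mix M F n \<le> exp (- \<kappa> * real n) / \<kappa>"
proof -
  have "beta_approx M F (X 1) n \<le> Max ((\<lambda>j. beta_approx M F (X j) n) ` {1..L})"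
    using L1 by (intro Max_ge) auto
  moreover have "0 \<le> beta_approx M F (X 1) n" using L1 by (intro beta_nonneg) auto
  ultimately show ?thesis using C1[of n] by linarith
qed

lemma beta_exp_bound: "j \<in> {1..L} \<Longrightarrow> beta_approx M F (X j) n \<le> exp (- \<kappa> * real n) / \<kappa>"
proof -
  assume j: "j \<in> {1..L}"
  have "beta_approx M F (X j) n \<le> Max ((\<lambda>j. beta_approx M F (X j) n) ` {1..L})"
    using j by (intro Max_ge) auto
  moreover have "0 \<le> alpha_mix M F n" by (rule alpha_mix_nonneg) (rule sub)
  ultimately show ?thesis using C1[of n] by linarith
qed

text \<open>Decorrelation of the approximating conditional expectations: with windows of
  size \<open>g div 3\<close> around \<open>g\<close>-separated times, the windows are \<open>g div 3\<close> apart.\<close>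
lemma CE_prod_decorrelation:
  fixes I :: "'b set" and jj :: "'b \<Rightarrow> nat" and \<tau> :: "'b \<Rightarrow> nat"
  assumes fin: "finite I" and jj: "\<And>x. x \<in> I \<Longrightarrow> jj x \<in> {1..L}"
    and sep: "\<And>x y. x \<in> I \<Longrightarrow> y \<in> I \<Longrightarrow> x \<noteq> y \<Longrightarrow> \<tau> x + g \<le> \<tau> y \<or> \<tau> y + g \<le> \<tau> x"
  shows "\<bar>(\<integral>\<omega>. (\<Prod>x\<in>I. CE (jj x) (\<tau> x) (g div 3) \<omega>) \<partial>M) - (\<Prod>x\<in>I. \<integral>\<omega>. X (jj x) 0 \<omega> \<partial>M)\<bar>
    \<le> 4 * real (card I) * (exp (- \<kappa> * real (g div 3)) / \<kappa>) * D1 ^ card I"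
proof -
  define s where "s = g div 3"
  have s2: "2 * s \<le> g" unfolding s_def by simp
  have "alpha_mix M F (g - 2 * s) \<le> exp (- \<kappa> * real (g - 2 * s)) / \<kappa>" by (rule alpha_exp_bound)
  also have "\<dots> \<le> exp (- \<kappa> * real s) / \<kappa>"
    using kap s2 unfolding s_def by (intro divide_right_mono) auto
  finally have \<alpha>: "alpha_mix M F (g - 2 * s) \<le> exp (- \<kappa> * real s) / \<kappa>" .
  have "\<bar>(\<integral>\<omega>. (\<Prod>x\<in>I. CE (jj x) (\<tau> x) s \<omega>) \<partial>M) - (\<Prod>x\<in>I. \<integral>\<omega>. CE (jj x) (\<tau> x) s \<omega> \<partial>M)\<bar>
      \<le> 4 * real (card I) * alpha_mix M F (g - 2 * s) * D1 ^ card I"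
    by (rule mixing_prod_decorrelation[OF sub mono s2 _ fin sep]) (use D1_ge_1 CE_bound jj in auto)
  also have "\<dots> \<le> 4 * real (card I) * (exp (- \<kappa> * real s) / \<kappa>) * D1 ^ card I"
    using \<alpha> D1_ge_1 by (intro mult_right_mono mult_left_mono) auto
  also have "(\<Prod>x\<in>I. \<integral>\<omega>. CE (jj x) (\<tau> x) s \<omega> \<partial>M) = (\<Prod>x\<in>I. \<integral>\<omega>. X (jj x) 0 \<omega> \<partial>M)"
    by (rule prod.cong) (use integral_CE jj in auto)
  finally show ?thesis unfolding s_def .
qed

lemma CE_prod_error:
  fixes I :: "'b set" and jj :: "'b \<Rightarrow> nat" and \<tau> :: "'b \<Rightarrow> nat"
  assumes fin: "finite I" and jj: "\<And>x. x \<in> I \<Longrightarrow> jj x \<in> {1..L}"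
  shows "\<bar>(\<integral>\<omega>. (\<Prod>x\<in>I. X (jj x) (\<tau> x) \<omega>) \<partial>M) - (\<integral>\<omega>. (\<Prod>x\<in>I. CE (jj x) (\<tau> x) s \<omega>) \<partial>M)\<bar>
    \<le> real (card I) * (exp (- \<kappa> * real s) / \<kappa>) * D1 ^ card I"
proof -
  define Z where "Z = (\<lambda>x. CE (jj x) (\<tau> x) s)"
  define c where "c = card I"
  have XM[measurable]: "\<And>x. x \<in> I \<Longrightarrow> X (jj x) (\<tau> x) \<in> borel_measurable M" using rv jj by blast
  have AEall: "AE \<omega> in M. \<forall>x\<in>I. \<bar>X (jj x) (\<tau> x) \<omega>\<bar> \<le> D1 \<and> \<bar>Z x \<omega>\<bar> \<le> D1"
    using fin by (subst AE_finite_all) (auto intro: bnd_D1 CE_bound jj elim!: eventually_elim2 simp: Z_def)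
  have iPX: "integrable M (\<lambda>\<omega>. \<Prod>x\<in>I. X (jj x) (\<tau> x) \<omega>)"
    by (rule integrable_const_bound[where B="D1 ^ card I"])
       (use AEall in \<open>auto elim!: eventually_mono intro!: abs_prod_le_power\<close>)
  have iPZ: "integrable M (\<lambda>\<omega>. \<Prod>x\<in>I. Z x \<omega>)"
    by (rule integrable_const_bound[where B="D1 ^ card I"])
       (use AEall in \<open>auto elim!: eventually_mono intro!: abs_prod_le_power simp: Z_def\<close>)
  have iD: "\<And>x. x \<in> I \<Longrightarrow> integrable M (\<lambda>\<omega>. \<bar>X (jj x) (\<tau> x) \<omega> - Z x \<omega>\<bar>)"
    unfolding Z_def using integrable_X integrable_CE jj
    by (intro integrable_abs Bochner_Integration.integrable_diff) auto
  have "\<bar>(\<integral>\<omega>. (\<Prod>x\<in>I. X (jj x) (\<tau> x) \<omega>) \<partial>M) - (\<integral>\<omega>. (\<Prod>x\<in>I. Z x \<omega>) \<partial>M)\<bar>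
      = \<bar>\<integral>\<omega>. (\<Prod>x\<in>I. X (jj x) (\<tau> x) \<omega>) - (\<Prod>x\<in>I. Z x \<omega>) \<partial>M\<bar>"
    using iPX iPZ by simp
  also have "\<dots> \<le> (\<integral>\<omega>. \<bar>(\<Prod>x\<in>I. X (jj x) (\<tau> x) \<omega>) - (\<Prod>x\<in>I. Z x \<omega>)\<bar> \<partial>M)"
    by (rule integral_abs_bound)
  also have "\<dots> \<le> (\<integral>\<omega>. D1 ^ c * (\<Sum>x\<in>I. \<bar>X (jj x) (\<tau> x) \<omega> - Z x \<omega>\<bar>) \<partial>M)"
  proof (rule integral_mono_AE)
    show "integrable M (\<lambda>\<omega>. \<bar>(\<Prod>x\<in>I. X (jj x) (\<tau> x) \<omega>) - (\<Prod>x\<in>I. Z x \<omega>)\<bar>)"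
      using iPX iPZ by auto
    show "integrable M (\<lambda>\<omega>. D1 ^ c * (\<Sum>x\<in>I. \<bar>X (jj x) (\<tau> x) \<omega> - Z x \<omega>\<bar>))"
      using iD by auto
    show "AE \<omega> in M. \<bar>(\<Prod>x\<in>I. X (jj x) (\<tau> x) \<omega>) - (\<Prod>x\<in>I. Z x \<omega>)\<bar>
        \<le> D1 ^ c * (\<Sum>x\<in>I. \<bar>X (jj x) (\<tau> x) \<omega> - Z x \<omega>\<bar>)"
      using AEall unfolding c_def by eventually_elim (rule abs_prod_diff_le[OF fin _ _ D1_ge_1], auto)
  qed
  also have "\<dots> = D1 ^ c * (\<Sum>x\<in>I. \<integral>\<omega>. \<bar>X (jj x) (\<tau> x) \<omega> - Z x \<omega>\<bar> \<partial>M)"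
    using iD by (simp add: integral_sum)
  also have "\<dots> \<le> D1 ^ c * (\<Sum>x\<in>I. exp (- \<kappa> * real s) / \<kappa>)"
  proof (intro mult_left_mono sum_mono)
    fix x assume x: "x \<in> I"
    show "(\<integral>\<omega>. \<bar>X (jj x) (\<tau> x) \<omega> - Z x \<omega>\<bar> \<partial>M) \<le> exp (- \<kappa> * real s) / \<kappa>"
      unfolding Z_def using CE_error_le_beta[OF jj[OF x]] beta_exp_bound[OF jj[OF x]] by (rule order_trans)
  qed (use D1_ge_1 in auto)
  finally show ?thesis unfolding c_def Z_def by (simp add: algebra_simps)
qed

lemma prod_separated_approx:
  fixes I :: "'b set" and jj :: "'b \<Rightarrow> nat" and \<tau> :: "'b \<Rightarrow> nat"
  assumes fin: "finite I" and jj: "\<And>x. x \<in> I \<Longrightarrow> jj x \<in> {1..L}"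
    and sep: "\<And>x y. x \<in> I \<Longrightarrow> y \<in> I \<Longrightarrow> x \<noteq> y \<Longrightarrow> \<tau> x + g \<le> \<tau> y \<or> \<tau> y + g \<le> \<tau> x"
  shows "\<bar>(\<integral>\<omega>. (\<Prod>x\<in>I. X (jj x) (\<tau> x) \<omega>) \<partial>M) - (\<Prod>x\<in>I. \<integral>\<omega>. X (jj x) 0 \<omega> \<partial>M)\<bar>
     \<le> 5 * real (card I) * D1 ^ card I * (exp (- \<kappa> * real (g div 3)) / \<kappa>)"
proof -
  define e where "e = exp (- \<kappa> * real (g div 3)) / \<kappa>"
  define c where "c = card I"
  have "\<bar>(\<integral>\<omega>. (\<Prod>x\<in>I. CE (jj x) (\<tau> x) (g div 3) \<omega>) \<partial>M) - (\<Prod>x\<in>I. \<integral>\<omega>. X (jj x) 0 \<omega> \<partial>M)\<bar>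
      \<le> 4 * real c * e * D1 ^ c"
    using CE_prod_decorrelation[OF fin jj sep] unfolding e_def c_def .
  moreover have "\<bar>(\<integral>\<omega>. (\<Prod>x\<in>I. X (jj x) (\<tau> x) \<omega>) \<partial>M) - (\<integral>\<omega>. (\<Prod>x\<in>I. CE (jj x) (\<tau> x) (g div 3) \<omega>) \<partial>M)\<bar>
      \<le> real c * e * D1 ^ c"
    using CE_prod_error[OF fin jj] unfolding e_def c_def .
  moreover have "5 * real c * D1 ^ c * e = 4 * real c * e * D1 ^ c + real c * e * D1 ^ c"
    by (simp add: algebra_simps)
  ultimately show ?thesis unfolding e_def[symmetric] c_def[symmetric] by linarith
qed

end

section \<open>The nonconventional averages\<close>

locale nonconventional_average =
  mixing_processes M L X D F \<kappa> + admissible_times L q r p \<gamma> n0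
  for M :: "'a measure" and L X D F \<kappa> q r p \<gamma> n0
begin

definition Y :: "nat \<Rightarrow> 'a \<Rightarrow> real" where
  "Y k \<omega> = (\<Prod>j\<in>{1..L}. X j (q j k) \<omega>)"

definition a :: real where
  "a = (\<Prod>j\<in>{1..L}. \<integral>\<omega>. X j 0 \<omega> \<partial>M)"

definition \<epsilon> :: "nat \<Rightarrow> real" where
  "\<epsilon> g = exp (- \<kappa> * real (g div 3)) / \<kappa>"

lemma eps_nonneg: "0 \<le> \<epsilon> g" unfolding \<epsilon>_def using kap by simp

lemma Y_measurable[measurable]: "Y k \<in> borel_measurable M"
  unfolding Y_def using rv by (intro borel_measurable_prod) auto

lemma Y_bound: "AE \<omega> in M. \<bar>Y k \<omega>\<bar> \<le> D1 ^ L"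
  using AE_abs_prod_le[where I="{1..L}" and Z="\<lambda>j. X j (q j k)" and B=D1] bnd_D1 unfolding Y_def by simp

lemma a_bound: "\<bar>a\<bar> \<le> D1 ^ L"
proof -
  have "\<bar>a\<bar> \<le> D1 ^ card {1..L}" unfolding a_def
    by (rule abs_prod_le_power) (use abs_integral_le_const rv bnd_D1 in blast)
  then show ?thesis by simp
qed

lemma integral_Y_approx:
  assumes "separated k g"
  shows "\<bar>(\<integral>\<omega>. Y k \<omega> \<partial>M) - a\<bar> \<le> 5 * real L * D1 ^ L * \<epsilon> g"
proof -
  have "\<bar>(\<integral>\<omega>. (\<Prod>x\<in>{1..L}. X (id x) (q x k) \<omega>) \<partial>M) - (\<Prod>x\<in>{1..L}. \<integral>\<omega>. X (id x) 0 \<omega> \<partial>M)\<bar>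
     \<le> 5 * real (card {1..L}) * D1 ^ card {1..L} * (exp (- \<kappa> * real (g div 3)) / \<kappa>)"
    by (rule prod_separated_approx) (use assms in \<open>auto simp: separated_def\<close>)
  then show ?thesis unfolding Y_def a_def \<epsilon>_def by simp
qed

lemma integral_YY_approx:
  assumes good: "good_pair k m g"
  shows "\<bar>(\<integral>\<omega>. Y k \<omega> * Y m \<omega> \<partial>M) - a * a\<bar> \<le> 5 * real (2 * L) * D1 ^ (2 * L) * \<epsilon> g"
proof -
  define I where "I = {1..L} \<times> {0, 1::nat}"
  have cI: "card I = 2 * L" unfolding I_def by (simp add: card_cartesian_product)
  have split: "(\<Prod>x\<in>I. f x) = (\<Prod>j\<in>{1..L}. f (j, 0)) * (\<Prod>j\<in>{1..L}. f (j, 1))"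
    for f :: "nat \<times> nat \<Rightarrow> real"
  proof -
    have "(\<Prod>x\<in>I. f x) = (\<Prod>(j,c)\<in>{1..L} \<times> {0, 1::nat}. f (j, c))"
      unfolding I_def by (simp add: case_prod_beta')
    also have "\<dots> = (\<Prod>j\<in>{1..L}. \<Prod>c\<in>{0, 1::nat}. f (j, c))" by (rule prod.cartesian_product[symmetric])
    finally show ?thesis by (simp add: prod.distrib)
  qed
  have "\<bar>(\<integral>\<omega>. (\<Prod>x\<in>I. X (fst x) (pair_time k m x) \<omega>) \<partial>M) - (\<Prod>x\<in>I. \<integral>\<omega>. X (fst x) 0 \<omega> \<partial>M)\<bar>
     \<le> 5 * real (card I) * D1 ^ card I * (exp (- \<kappa> * real (g div 3)) / \<kappa>)"
    by (rule prod_separated_approx) (use good_pair_separated[OF good] in \<open>auto simp: I_def\<close>)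
  then show ?thesis unfolding cI split by (simp add: pair_time_def Y_def a_def \<epsilon>_def prod.distrib)
qed

lemma Y_minus_a_bound: "AE \<omega> in M. \<bar>Y k \<omega> - a\<bar> \<le> 2 * D1 ^ L"
  using Y_bound[of k] by eventually_elim (use a_bound in auto)

lemma integrable_Y: "integrable M (Y k)"
  by (rule integrable_const_bound) (use Y_bound in auto)

lemma power_double: "D1 ^ (2*L) = D1 ^ L * D1 ^ L"
  by (subst mult_2) (rule power_add)

lemma cov_term_bound_AE: "AE \<omega> in M. \<bar>(Y k \<omega> - a) * (Y m \<omega> - a)\<bar> \<le> 4 * D1 ^ (2*L)"
  using Y_minus_a_bound[of k] Y_minus_a_bound[of m]
proof eventually_elim
  case (elim \<omega>)
  have "\<bar>(Y k \<omega> - a) * (Y m \<omega> - a)\<bar> \<le> (2 * D1 ^ L) * (2 * D1 ^ L)"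
    unfolding abs_mult using elim by (intro mult_mono) auto
  also have "\<dots> = 4 * D1 ^ (2*L)" unfolding power_double by simp
  finally show ?case .
qed

lemma integrable_cov_term: "integrable M (\<lambda>\<omega>. (Y k \<omega> - a) * (Y m \<omega> - a))"
  by (rule integrable_const_bound) (use cov_term_bound_AE in auto)

lemma integrable_YY: "integrable M (\<lambda>\<omega>. Y k \<omega> * Y m \<omega>)"
proof (rule integrable_const_bound)
  show "AE \<omega> in M. norm (Y k \<omega> * Y m \<omega>) \<le> D1 ^ L * D1 ^ L"
    using Y_bound[of k] Y_bound[of m] by eventually_elim (auto simp: abs_mult intro: mult_mono)
qed simp

lemma cov_term_bound: "\<bar>\<integral>\<omega>. (Y k \<omega> - a) * (Y m \<omega> - a) \<partial>M\<bar> \<le> 4 * D1 ^ (2*L)"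
  by (rule abs_integral_le_const) (auto intro: cov_term_bound_AE)

definition K :: real where
  "K = 20 * real L * D1 ^ (2*L)"

lemma cov_good_pair:
  assumes g: "good_pair k m g"
  shows "\<bar>\<integral>\<omega>. (Y k \<omega> - a) * (Y m \<omega> - a) \<partial>M\<bar> \<le> K * \<epsilon> g"
proof -
  have sk: "separated k g" "separated m g" using g unfolding good_pair_def by auto
  have e: "(\<integral>\<omega>. (Y k \<omega> - a) * (Y m \<omega> - a) \<partial>M)
      = ((\<integral>\<omega>. Y k \<omega> * Y m \<omega> \<partial>M) - a * a) - a * ((\<integral>\<omega>. Y k \<omega> \<partial>M) - a) - a * ((\<integral>\<omega>. Y m \<omega> \<partial>M) - a)"
  proof -
    have "(\<integral>\<omega>. (Y k \<omega> - a) * (Y m \<omega> - a) \<partial>M) = (\<integral>\<omega>. Y k \<omega> * Y m \<omega> - a * Y k \<omega> - a * Y m \<omega> + a * a \<partial>M)"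
      by (simp add: algebra_simps)
    also have "\<dots> = (\<integral>\<omega>. Y k \<omega> * Y m \<omega> \<partial>M) - a * (\<integral>\<omega>. Y k \<omega> \<partial>M) - a * (\<integral>\<omega>. Y m \<omega> \<partial>M) + a * a"
      using integrable_YY[of k m] integrable_Y[of k] integrable_Y[of m] by (simp add: prob_space)
    finally show ?thesis by (simp add: algebra_simps)
  qed
  have b1: "\<bar>(\<integral>\<omega>. Y k \<omega> * Y m \<omega> \<partial>M) - a * a\<bar> \<le> 5 * real (2 * L) * D1 ^ (2 * L) * \<epsilon> g" by (rule integral_YY_approx[OF g])
  have b2: "\<bar>a * ((\<integral>\<omega>. Y k \<omega> \<partial>M) - a)\<bar> \<le> D1 ^ L * (5 * real L * D1 ^ L * \<epsilon> g)"
    unfolding abs_mult by (rule mult_mono[OF a_bound integral_Y_approx[OF sk(1)]]) (use D1_ge_1 in auto)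
  have b3: "\<bar>a * ((\<integral>\<omega>. Y m \<omega> \<partial>M) - a)\<bar> \<le> D1 ^ L * (5 * real L * D1 ^ L * \<epsilon> g)"
    unfolding abs_mult by (rule mult_mono[OF a_bound integral_Y_approx[OF sk(2)]]) (use D1_ge_1 in auto)
  have eq: "D1 ^ L * (5 * real L * D1 ^ L * \<epsilon> g) = 5 * real L * D1 ^ (2*L) * \<epsilon> g"
    unfolding power_double by (simp add: algebra_simps)
  define u where "u = (\<integral>\<omega>. Y k \<omega> * Y m \<omega> \<partial>M) - a * a"
  define v where "v = a * ((\<integral>\<omega>. Y k \<omega> \<partial>M) - a)"
  define w where "w = a * ((\<integral>\<omega>. Y m \<omega> \<partial>M) - a)"
  define unit where "unit = real L * D1 ^ (2*L) * \<epsilon> g"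
  have "\<bar>u\<bar> \<le> 10 * unit" using b1 unfolding u_def unit_def by simp
  moreover have "\<bar>v\<bar> \<le> 5 * unit" using b2 eq unfolding v_def unit_def by simp
  moreover have "\<bar>w\<bar> \<le> 5 * unit" using b3 eq unfolding w_def unit_def by simp
  moreover have "\<bar>u - v - w\<bar> \<le> \<bar>u\<bar> + \<bar>v\<bar> + \<bar>w\<bar>" by (smt (verit))
  ultimately have "\<bar>u - v - w\<bar> \<le> 20 * unit" by linarith
  moreover have "K * \<epsilon> g = 20 * unit" unfolding K_def unit_def by simp
  ultimately show ?thesis unfolding e u_def[symmetric] v_def[symmetric] w_def[symmetric] by simp
qed

definition centered_sum :: "nat \<Rightarrow> 'a \<Rightarrow> real" where
  "centered_sum n \<omega> = (\<Sum>k\<in>{0..n}. Y k \<omega> - a)"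

lemma centered_sum_sq_integral: "(\<integral>\<omega>. (centered_sum n \<omega>)^2 \<partial>M) = (\<Sum>x\<in>{0..n}\<times>{0..n}. \<integral>\<omega>. (Y (fst x) \<omega> - a) * (Y (snd x) \<omega> - a) \<partial>M)"
proof -
  have "(\<integral>\<omega>. (centered_sum n \<omega>)^2 \<partial>M) = (\<integral>\<omega>. (\<Sum>k\<in>{0..n}. \<Sum>m\<in>{0..n}. (Y k \<omega> - a) * (Y m \<omega> - a)) \<partial>M)"
    unfolding centered_sum_def power2_eq_square sum_product ..
  also have "\<dots> = (\<Sum>k\<in>{0..n}. \<Sum>m\<in>{0..n}. \<integral>\<omega>. (Y k \<omega> - a) * (Y m \<omega> - a) \<partial>M)"
    using integrable_cov_term by (simp add: integral_sum)
  also have "\<dots> = (\<Sum>x\<in>{0..n}\<times>{0..n}. \<integral>\<omega>. (Y (fst x) \<omega> - a) * (Y (snd x) \<omega> - a) \<partial>M)"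
    by (subst sum.cartesian_product) (simp add: case_prod_beta')
  finally show ?thesis .
qed

text \<open>Second moment of the centred sum: bad pairs contribute \<open>O(1)\<close> each, good pairs
  \<open>O(\<epsilon>(g))\<close> each.\<close>
lemma centered_sum_sq_bound: "(\<integral>\<omega>. (centered_sum n \<omega>)^2 \<partial>M) \<le> 4 * D1 ^ (2*L) * real (card (bad_pairs n g)) + (real n + 1)^2 * (K * \<epsilon> g)"
proof -
  define A where "A = {0..n}\<times>{0..n}"
  define c where "c = (\<lambda>x. \<integral>\<omega>. (Y (fst x) \<omega> - a) * (Y (snd x) \<omega> - a) \<partial>M)"
  have fA: "finite A" unfolding A_def by simp
  have bA: "bad_pairs n g \<subseteq> A" unfolding bad_pairs_def A_def by auto
  have K0: "0 \<le> K * \<epsilon> g" unfolding K_def using eps_nonneg D1_ge_1 by simp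
  have "(\<Sum>x\<in>A. c x) = (\<Sum>x\<in>bad_pairs n g. c x) + (\<Sum>x\<in>A - bad_pairs n g. c x)"
    using sum.subset_diff[OF bA fA] by (simp add: add.commute)
  also have "(\<Sum>x\<in>bad_pairs n g. c x) \<le> real (card (bad_pairs n g)) * (4 * D1 ^ (2*L))"
    by (rule sum_bounded_above) (use cov_term_bound in \<open>auto simp: c_def abs_le_iff\<close>)
  also have "(\<Sum>x\<in>A - bad_pairs n g. c x) \<le> real (card (A - bad_pairs n g)) * (K * \<epsilon> g)"
  proof (rule sum_bounded_above)
    fix x assume "x \<in> A - bad_pairs n g"
    then have "good_pair (fst x) (snd x) g" unfolding A_def bad_pairs_def by auto
    then show "c x \<le> K * \<epsilon> g" using cov_good_pair unfolding c_def abs_le_iff by blast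
  qed
  also have "real (card (A - bad_pairs n g)) * (K * \<epsilon> g) \<le> real (card A) * (K * \<epsilon> g)"
    using K0 fA by (intro mult_right_mono) (auto intro: card_mono)
  also have "real (card A) = (real n + 1)^2" unfolding A_def by (simp add: card_cartesian_product power2_eq_square algebra_simps)
  finally show ?thesis unfolding centered_sum_sq_integral c_def A_def by (simp add: algebra_simps)
qed

definition avg :: "nat \<Rightarrow> 'a \<Rightarrow> real" where
  "avg n \<omega> = (1 / real n) * (\<Sum>k=0..n. Y k \<omega>)"

lemma integrable_centered_sq: "integrable M (\<lambda>\<omega>. (centered_sum n \<omega>)^2)"
  unfolding centered_sum_def power2_eq_square sum_product using integrable_cov_term by auto

text \<open>Since \<open>avg n - a = (centered_sum n + a) / n\<close>, its second moment is controlled by that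
  of the centred sum.\<close>
lemma var_bound:
  assumes n: "1 \<le> n"
  shows "(\<integral>\<omega>. (avg n \<omega> - a)^2 \<partial>M) \<le> 2 / (real n)^2 * (4 * D1 ^ (2*L) * real (card (bad_pairs n g)) + (real n + 1)^2 * (K * \<epsilon> g)) + 2 * a^2 / (real n)^2"
proof -
  have n0: "0 < real n" using n by simp
  have e: "\<And>\<omega>. avg n \<omega> - a = centered_sum n \<omega> / real n + a / real n"
  proof -
    fix \<omega>
    have "(\<Sum>k=0..n. Y k \<omega>) = centered_sum n \<omega> + (real n + 1) * a" unfolding centered_sum_def by (simp add: sum_subtractf algebra_simps)
    then show "avg n \<omega> - a = centered_sum n \<omega> / real n + a / real n" unfolding avg_def using n0 by (simp add: field_simps)
  qed
  have "(\<integral>\<omega>. (avg n \<omega> - a)^2 \<partial>M) \<le> (\<integral>\<omega>. 2 / (real n)^2 * (centered_sum n \<omega>)^2 + 2 * a^2 / (real n)^2 \<partial>M)"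
  proof (rule integral_mono)
    show "integrable M (\<lambda>\<omega>. (avg n \<omega> - a)\<^sup>2)" unfolding e power2_eq_square
      using integrable_centered_sq[of n] integrable_Y unfolding power2_eq_square centered_sum_def
      by (auto simp: algebra_simps sum_distrib_left sum_distrib_right)
    show "integrable M (\<lambda>\<omega>. 2 / (real n)^2 * (centered_sum n \<omega>)^2 + 2 * a^2 / (real n)^2)" using integrable_centered_sq[of n] by simp
    fix \<omega>
    have "(centered_sum n \<omega> / real n + a / real n)^2 \<le> 2 * (centered_sum n \<omega> / real n)^2 + 2 * (a / real n)^2"
      by (smt (verit) power2_diff zero_le_power2 power2_sum)
    then show "(avg n \<omega> - a)\<^sup>2 \<le> 2 / (real n)^2 * (centered_sum n \<omega>)^2 + 2 * a^2 / (real n)^2"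
      unfolding e by (simp add: power_divide)
  qed
  also have "\<dots> = 2 / (real n)^2 * (\<integral>\<omega>. (centered_sum n \<omega>)^2 \<partial>M) + 2 * a^2 / (real n)^2"
    using integrable_centered_sq[of n] by (simp add: prob_space)
  also have "\<dots> \<le> 2 / (real n)^2 * (4 * D1 ^ (2*L) * real (card (bad_pairs n g)) + (real n + 1)^2 * (K * \<epsilon> g)) + 2 * a^2 / (real n)^2"
    using centered_sum_sq_bound[of n g] by (intro add_right_mono mult_left_mono) auto
  finally show ?thesis .
qed

lemma avg_measurable[measurable]: "avg n \<in> borel_measurable M"
  unfolding avg_def by measurable

lemma integrable_avg_sq: "integrable M (\<lambda>\<omega>. (avg n \<omega> - a)^2)"
proof (rule integrable_const_bound)
  have "AE \<omega> in M. \<forall>k. \<bar>Y k \<omega>\<bar> \<le> D1 ^ L" using Y_bound by (simp add: AE_all_countable)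
  then show "AE \<omega> in M. norm ((avg n \<omega> - a)^2) \<le> ((real n + 1) * D1 ^ L + D1 ^ L)^2"
  proof eventually_elim
    case (elim \<omega>)
    have s: "\<bar>\<Sum>k=0..n. Y k \<omega>\<bar> \<le> (real n + 1) * D1 ^ L"
    proof -
      have "\<bar>\<Sum>k=0..n. Y k \<omega>\<bar> \<le> (\<Sum>k=0..n. \<bar>Y k \<omega>\<bar>)" by (rule sum_abs)
      also have "\<dots> \<le> (\<Sum>k=0..n. D1 ^ L)" using elim by (intro sum_mono) auto
      finally show ?thesis by (simp add: add.commute)
    qed
    have "\<bar>1 / real n\<bar> \<le> 1" by (cases n) auto
    then have "\<bar>avg n \<omega>\<bar> \<le> 1 * ((real n + 1) * D1 ^ L)" unfolding avg_def abs_mult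
      using s by (intro mult_mono) auto
    then have "\<bar>avg n \<omega> - a\<bar> \<le> (real n + 1) * D1 ^ L + D1 ^ L" using a_bound by simp
    then have "\<bar>avg n \<omega> - a\<bar>^2 \<le> ((real n + 1) * D1 ^ L + D1 ^ L)^2" by (intro power_mono) auto
    then show ?case by simp
  qed
qed simp

definition var_const :: real where
  "var_const = 16 * D1 ^ (2*L) * real bad_const + 2 * D1 ^ (2*L)"

lemma var_bound_explicit:
  assumes n1: "1 \<le> n"
  shows "(\<integral>\<omega>. (avg n \<omega> - a)^2 \<partial>M) \<le> var_const * ((real g + 1) ^ sep_exp / real n) + 8 * (K * \<epsilon> g)"
proof -
  define nr where "nr = real n"
  define R where "R = (real g + 1) ^ sep_exp"
  define B2 where "B2 = D1 ^ (2*L)"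
  define bd where "bd = real (card (bad_pairs n g))"
  have nr1: "1 \<le> nr" unfolding nr_def using n1 by simp
  have R1: "1 \<le> R" unfolding R_def by simp
  have B20: "0 \<le> B2" unfolding B2_def using D1_ge_1 by simp
  have Ke: "0 \<le> K * \<epsilon> g" unfolding K_def using eps_nonneg D1_ge_1 by simp
  have vb: "(\<integral>\<omega>. (avg n \<omega> - a)^2 \<partial>M) \<le> 2 / nr^2 * (4 * B2 * bd + (nr + 1)^2 * (K * \<epsilon> g)) + 2 * a^2 / nr^2"
    using var_bound[OF n1, of g] unfolding nr_def B2_def bd_def .
  have "bd \<le> (nr + 1) * real bad_const * R" unfolding bd_def nr_def R_def by (rule bad_pairs_card)
  then have s1: "2 / nr^2 * (4 * B2 * bd) \<le> 16 * B2 * real bad_const * R / nr"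
  proof -
    assume bdl: "bd \<le> (nr + 1) * real bad_const * R"
    have "2 / nr^2 * (4 * B2 * bd) \<le> 2 / nr^2 * (4 * B2 * ((nr + 1) * real bad_const * R))"
      using bdl B20 nr1 by (intro mult_left_mono) auto
    also have "\<dots> \<le> 2 / nr^2 * (4 * B2 * ((2 * nr) * real bad_const * R))"
      using B20 nr1 R1 by (intro mult_left_mono mult_right_mono) auto
    also have "\<dots> = 16 * B2 * real bad_const * R / nr" using nr1 by (simp add: field_simps power2_eq_square)
    finally show ?thesis .
  qed
  have s2: "2 / nr^2 * ((nr + 1)^2 * (K * \<epsilon> g)) \<le> 8 * (K * \<epsilon> g)"
  proof -
    have "(nr + 1)^2 \<le> (2 * nr)^2" using nr1 by (intro power_mono) auto
    then have "2 / nr^2 * ((nr + 1)^2 * (K * \<epsilon> g)) \<le> 2 / nr^2 * ((2 * nr)^2 * (K * \<epsilon> g))"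
      using Ke nr1 by (intro mult_left_mono mult_right_mono) auto
    also have "\<dots> = 8 * (K * \<epsilon> g)" using nr1 by (simp add: field_simps power2_eq_square)
    finally show ?thesis .
  qed
  have s3: "2 * a^2 / nr^2 \<le> 2 * B2 * R / nr"
  proof -
    have "a^2 \<le> (D1 ^ L)^2" using a_bound by (metis abs_ge_zero power2_abs power_mono)
    also have "\<dots> = B2" unfolding B2_def by (simp add: power_double power2_eq_square)
    finally have "2 * a^2 / nr^2 \<le> 2 * B2 / nr^2" using nr1 by (intro divide_right_mono) auto
    also have "\<dots> \<le> 2 * B2 / nr" using nr1 B20 by (intro divide_left_mono) (auto simp: power2_eq_square)
    also have "\<dots> \<le> 2 * B2 * R / nr" using R1 B20 nr1 by (intro divide_right_mono) (auto simp: mult_le_cancel_left1)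
    finally show ?thesis .
  qed
  have "(\<integral>\<omega>. (avg n \<omega> - a)^2 \<partial>M) \<le> (16 * B2 * real bad_const + 2 * B2) * (R / nr) + 8 * (K * \<epsilon> g)"
    using vb s1 s2 s3 by (simp add: distrib_right distrib_left field_simps)
  then show ?thesis unfolding var_const_def B2_def R_def nr_def .
qed

text \<open>The subsequence exponent \<open>Q = P + 2\<close>: at \<open>n = i^Q\<close> and separation \<open>g = i\<close> the variance
  bound is \<open>O(1/i\<^sup>2) + O(\<epsilon>(i))\<close>, which is summable.\<close>
definition sub_exp :: nat where
  "sub_exp = sep_exp + 2"

lemma sub_exp_ge_1: "1 \<le> sub_exp" unfolding sub_exp_def by simp

lemma subseq_var_bound:
  assumes i: "1 \<le> i"
  shows "(\<integral>\<omega>. (avg (i ^ sub_exp) \<omega> - a)^2 \<partial>M) \<le> var_const * 2 ^ sep_exp / (real i)^2 + 8 * (K * \<epsilon> i)"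
proof -
  have ip: "0 < real i" using i by simp
  have "(real i + 1) ^ sep_exp \<le> (2 * real i) ^ sep_exp" using i by (intro power_mono) auto
  moreover have "real (i ^ sub_exp) = real i ^ sep_exp * (real i)^2"
    unfolding sub_exp_def by (simp add: power_add power2_eq_square)
  ultimately have ratio: "(real i + 1) ^ sep_exp / real (i ^ sub_exp) \<le> 2 ^ sep_exp / (real i)^2"
    using ip by (simp add: divide_simps power_mult_distrib)
  have "0 \<le> var_const" unfolding var_const_def using D1_ge_1 by simp
  then have "var_const * ((real i + 1) ^ sep_exp / real (i ^ sub_exp)) \<le> var_const * (2 ^ sep_exp / (real i)^2)"
    by (rule mult_left_mono[OF ratio])
  then show ?thesis using var_bound_explicit[of "i ^ sub_exp" i] i by simp
qed

lemma summable_subseq_var: "summable (\<lambda>i. \<integral>\<omega>. (avg (i^sub_exp) \<omega> - a)^2 \<partial>M)"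
proof (rule summable_comparison_test')
  show "summable (\<lambda>i::nat. var_const * 2 ^ sep_exp * inverse (real i ^ 2) + 8 * (K * \<epsilon> i))"
  proof (rule summable_add)
    show "summable (\<lambda>i::nat. var_const * 2 ^ sep_exp * inverse (real i ^ 2))"
      by (rule summable_mult) (rule inverse_power_summable, simp)
    show "summable (\<lambda>i. 8 * (K * \<epsilon> i))"
      unfolding \<epsilon>_def by (intro summable_mult summable_exp_div3 kap)
  qed
  fix i :: nat assume i: "1 \<le> i"
  have "0 \<le> (\<integral>\<omega>. (avg (i^sub_exp) \<omega> - a)^2 \<partial>M)" by (rule integral_nonneg_AE) auto
  then show "norm (\<integral>\<omega>. (avg (i^sub_exp) \<omega> - a)^2 \<partial>M) \<le> var_const * 2 ^ sep_exp * inverse (real i ^ 2) + 8 * (K * \<epsilon> i)"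
    using subseq_var_bound[OF i] by (simp add: divide_inverse)
qed

definition \<delta> :: "nat \<Rightarrow> real" where
  "\<delta> i = ((real i + 1) ^ sub_exp - real i ^ sub_exp) / real i ^ sub_exp"

lemma block_length_tendsto_zero: "\<delta> \<longlonglongrightarrow> 0"
  unfolding \<delta>_def by (rule relative_block_length_tendsto_zero[OF sub_exp_ge_1])

lemma avg_block_diff:
  assumes yb: "\<forall>k. \<bar>Y k \<omega>\<bar> \<le> D1 ^ L" and i: "1 \<le> i" and n: "i^sub_exp \<le> n" "n < (i+1)^sub_exp"
  shows "\<bar>avg n \<omega> - avg (i^sub_exp) \<omega>\<bar> \<le> 3 * D1 ^ L * \<delta> i"
proof -
  have m1: "1 \<le> i^sub_exp" using i by simp
  have "\<bar>avg n \<omega> - avg (i^sub_exp) \<omega>\<bar> \<le> 3 * D1 ^ L * (real n - real (i^sub_exp)) / real (i^sub_exp)"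
    unfolding avg_def by (rule average_shift_bound[OF _ m1 n(1)]) (use yb in auto)
  also have "\<dots> \<le> 3 * D1 ^ L * \<delta> i"
  proof -
    have "real n \<le> (real i + 1) ^ sub_exp"
    proof -
      have "n \<le> (i+1)^sub_exp" using n by simp
      then have "real n \<le> real ((i+1)^sub_exp)" by (simp only: of_nat_le_iff)
      then show ?thesis by (simp add: add.commute)
    qed
    then have "(real n - real i ^ sub_exp) / real i ^ sub_exp \<le> ((real i + 1) ^ sub_exp - real i ^ sub_exp) / real i ^ sub_exp"
      using i by (intro divide_right_mono) auto
    then have "(real n - real (i^sub_exp)) / real (i^sub_exp) \<le> ((real i + 1) ^ sub_exp - real i ^ sub_exp) / real i ^ sub_exp"
      by (simp only: of_nat_power)
    then have "3 * D1 ^ L * ((real n - real (i^sub_exp)) / real (i^sub_exp)) \<le> 3 * D1 ^ L * \<delta> i"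
      unfolding \<delta>_def using D1_ge_1 by (intro mult_left_mono) auto
    then show ?thesis by simp
  qed
  finally show ?thesis .
qed

text \<open>Almost sure convergence: along the subsequence by Borel-Cantelli, in between by
  \<open>avg_block_diff\<close>.\<close>
lemma AE_convergence: "AE \<omega> in M. (\<lambda>n. avg n \<omega>) \<longlonglongrightarrow> a"
proof -
  have AEh: "AE \<omega> in M. (\<lambda>i. (avg (i^sub_exp) \<omega> - a)^2) \<longlonglongrightarrow> 0"
    by (rule AE_tendsto_zero_of_summable_integrals[OF _ _ integrable_avg_sq summable_subseq_var]) auto
  have AEY: "AE \<omega> in M. \<forall>k. \<bar>Y k \<omega>\<bar> \<le> D1 ^ L" using Y_bound by (simp add: AE_all_countable)
  from AEh AEY show ?thesis
  proof eventually_elim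
    case (elim \<omega>)
    have "(\<lambda>i. sqrt ((avg (i^sub_exp) \<omega> - a)^2)) \<longlonglongrightarrow> sqrt 0"
      by (rule tendsto_real_sqrt[OF elim(1)])
    then have h1: "(\<lambda>i. \<bar>avg (i^sub_exp) \<omega> - a\<bar>) \<longlonglongrightarrow> 0" by simp
    have w: "(\<lambda>i. \<bar>avg (i^sub_exp) \<omega> - a\<bar> + 3 * D1 ^ L * \<delta> i) \<longlonglongrightarrow> 0"
      using tendsto_add[OF h1 tendsto_mult_right_zero[OF block_length_tendsto_zero, of "3 * D1 ^ L"]] by simp
    have "(\<lambda>n. avg n \<omega> - a) \<longlonglongrightarrow> 0"
    proof (rule tendsto_zero_blockwise[OF sub_exp_ge_1 w])
      fix i n :: nat assume i: "1 \<le> i" and n: "i^sub_exp \<le> n" "n < (i+1)^sub_exp"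
      have "\<bar>avg n \<omega> - a\<bar> \<le> \<bar>avg (i^sub_exp) \<omega> - a\<bar> + \<bar>avg n \<omega> - avg (i^sub_exp) \<omega>\<bar>" by linarith
      also have "\<dots> \<le> \<bar>avg (i^sub_exp) \<omega> - a\<bar> + 3 * D1 ^ L * \<delta> i"
        using avg_block_diff[OF elim(2) i n] by simp
      finally show "\<bar>avg n \<omega> - a\<bar> \<le> \<bar>avg (i^sub_exp) \<omega> - a\<bar> + 3 * D1 ^ L * \<delta> i" .
    qed
    then show ?case by (simp add: LIM_zero_iff)
  qed
qed

text \<open>Convergence in \<open>L\<^sup>2\<close>, by the same interpolation between the subsequence terms.\<close>
lemma L2_convergence: "(\<lambda>n. \<integral>\<omega>. (avg n \<omega> - a)^2 \<partial>M) \<longlonglongrightarrow> 0"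
proof (rule tendsto_zero_blockwise[OF sub_exp_ge_1])
  show "(\<lambda>i. 2 * (\<integral>\<omega>. (avg (i^sub_exp) \<omega> - a)^2 \<partial>M) + 2 * (3 * D1 ^ L * \<delta> i)^2) \<longlonglongrightarrow> 0"
  proof -
    have l1: "(\<lambda>i. \<integral>\<omega>. (avg (i^sub_exp) \<omega> - a)^2 \<partial>M) \<longlonglongrightarrow> 0" by (rule summable_LIMSEQ_zero[OF summable_subseq_var])
    have l2: "(\<lambda>i. 3 * D1 ^ L * \<delta> i) \<longlonglongrightarrow> 0" using tendsto_mult_right_zero[OF block_length_tendsto_zero] by simp
    have "(\<lambda>i. 2 * (\<integral>\<omega>. (avg (i^sub_exp) \<omega> - a)^2 \<partial>M) + 2 * (3 * D1 ^ L * \<delta> i)^2) \<longlonglongrightarrow> 2 * 0 + 2 * 0^2"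
      by (intro tendsto_intros l1 l2)
    then show ?thesis by simp
  qed
  fix i n :: nat assume i: "1 \<le> i" and n: "i^sub_exp \<le> n" "n < (i+1)^sub_exp"
  have AEY: "AE \<omega> in M. \<forall>k. \<bar>Y k \<omega>\<bar> \<le> D1 ^ L" using Y_bound by (simp add: AE_all_countable)
  have "0 \<le> (\<integral>\<omega>. (avg n \<omega> - a)^2 \<partial>M)" by (rule integral_nonneg_AE) auto
  then have "\<bar>\<integral>\<omega>. (avg n \<omega> - a)^2 \<partial>M\<bar> = (\<integral>\<omega>. (avg n \<omega> - a)^2 \<partial>M)" by simp
  also have "\<dots> \<le> (\<integral>\<omega>. 2 * (avg (i^sub_exp) \<omega> - a)^2 + 2 * (3 * D1 ^ L * \<delta> i)^2 \<partial>M)"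
  proof (rule integral_mono_AE)
    show "integrable M (\<lambda>\<omega>. (avg n \<omega> - a)\<^sup>2)" by (rule integrable_avg_sq)
    show "integrable M (\<lambda>\<omega>. 2 * (avg (i^sub_exp) \<omega> - a)^2 + 2 * (3 * D1 ^ L * \<delta> i)^2)" using integrable_avg_sq by simp
    show "AE \<omega> in M. (avg n \<omega> - a)\<^sup>2 \<le> 2 * (avg (i^sub_exp) \<omega> - a)^2 + 2 * (3 * D1 ^ L * \<delta> i)^2"
      using AEY
    proof eventually_elim
      case (elim \<omega>)
      have d: "\<bar>avg n \<omega> - avg (i^sub_exp) \<omega>\<bar> \<le> 3 * D1 ^ L * \<delta> i" by (rule avg_block_diff[OF elim i n])
      then have d2: "(avg n \<omega> - avg (i^sub_exp) \<omega>)^2 \<le> (3 * D1 ^ L * \<delta> i)^2"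
        by (metis abs_ge_zero power2_abs power_mono)
      have "(avg n \<omega> - a)^2 \<le> 2 * (avg (i^sub_exp) \<omega> - a)^2 + 2 * (avg n \<omega> - avg (i^sub_exp) \<omega>)^2"
        by (smt (verit) zero_le_power2 power2_diff power2_sum)
      then show ?case using d2 by linarith
    qed
  qed
  also have "\<dots> = 2 * (\<integral>\<omega>. (avg (i^sub_exp) \<omega> - a)^2 \<partial>M) + 2 * (3 * D1 ^ L * \<delta> i)^2"
    using integrable_avg_sq by (simp add: prob_space)
  finally show "\<bar>\<integral>\<omega>. (avg n \<omega> - a)^2 \<partial>M\<bar> \<le> 2 * (\<integral>\<omega>. (avg (i^sub_exp) \<omega> - a)^2 \<partial>M) + 2 * (3 * D1 ^ L * \<delta> i)^2" .
qed

end

theorem mainTheorem10: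
  fixes M :: "'a measure" and L :: nat and X :: "nat \<Rightarrow> nat \<Rightarrow> 'a \<Rightarrow> real" and D :: real
    and F :: "int extended \<Rightarrow> int extended \<Rightarrow> 'a measure"
    and q :: "nat \<Rightarrow> nat \<Rightarrow> nat" and \<kappa> :: real and r p :: nat
  assumes "prob_space M"
    and "L \<ge> 1"
    and rv: "\<And>j n. j \<in> {1..L} \<Longrightarrow> X j n \<in> borel_measurable M"
    and stat: "\<And>j. j \<in> {1..L} \<Longrightarrow> stationary_proc M (X j)"
    and bnd: "\<And>j n. j \<in> {1..L} \<Longrightarrow> AE \<omega> in M. \<bar>X j n \<omega>\<bar> \<le> D"
    and sub: "\<And>k l. subalgebra M (F k l)"
    and mono: "\<And>k l k' l'. k' \<le> k \<Longrightarrow> l \<le> l' \<Longrightarrow> sets (F k l) \<subseteq> sets (F k' l')"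
    and C1: "\<kappa> > 0" "\<And>n. alpha_mix M F n + Max ((\<lambda>j. beta_approx M F (X j) n) ` {1..L})
                 \<le> exp (- \<kappa> * real n) / \<kappa>"
    and C2: "r > 0" "\<And>n. q 1 n = r * n + p"
    and C34: "\<exists>\<gamma>::real. 0 < \<gamma> \<and> \<gamma> < 1 \<and> (\<exists>n0::nat. n0 > 1 \<and> (\<forall>n\<ge>n0.
                 (\<forall>j\<in>{2..L}. real (q j (n + 1)) \<ge> real (q j n) + real n powr \<gamma>) \<and>
                 (\<forall>j\<in>{1..<L}. real (q (j + 1) (nat \<lfloor>real n powr (1 - \<gamma>)\<rfloor>))
                                  \<ge> real (q j n) * real n powr \<gamma>)))"
  defines "S \<equiv> \<lambda>n \<omega>. (1 / real n) * (\<Sum>k=0..n. \<Prod>j=1..L. X j (q j k) \<omega>)"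
    and "a \<equiv> (\<Prod>j=1..L. integral\<^sup>L M (X j 0))"
  shows "(\<lambda>n. integral\<^sup>L M (\<lambda>\<omega>. (S n \<omega> - a)\<^sup>2)) \<longlonglongrightarrow> 0 \<and>
         (AE \<omega> in M. (\<lambda>n. S n \<omega>) \<longlonglongrightarrow> a)"
proof -
  from C34 obtain \<gamma> :: real and n0 :: nat where \<gamma>: "0 < \<gamma>" "\<gamma> < 1" and n0: "n0 > 1"
    and growth: "\<forall>n\<ge>n0. (\<forall>j\<in>{2..L}. real (q j (n + 1)) \<ge> real (q j n) + real n powr \<gamma>) \<and>
                 (\<forall>j\<in>{1..<L}. real (q (j + 1) (nat \<lfloor>real n powr (1 - \<gamma>)\<rfloor>))
                                  \<ge> real (q j n) * real n powr \<gamma>)"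
    by blast
  interpret A: nonconventional_average M L X D F \<kappa> q r p \<gamma> n0
  proof (intro nonconventional_average.intro)
    show "mixing_processes M L X D F \<kappa>"
      unfolding mixing_processes_def mixing_processes_axioms_def
      using \<open>prob_space M\<close> \<open>L \<ge> 1\<close> rv stat bnd sub mono C1 by blast
    show "admissible_times L q r p \<gamma> n0"
      unfolding admissible_times_def using C2 \<gamma> n0 growth by blast
  qed
  have "S = A.avg" by (simp add: S_def A.avg_def A.Y_def fun_eq_iff)
  moreover have "a = A.a" by (simp add: a_def A.a_def)
  ultimately show ?thesis using A.L2_convergence A.AE_convergence by simp
qed

end
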